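(* Let $\Phi$ be a Young function with $\Phi,\widetilde\Phi\in\Delta_2$, $\Phi(t)=\int_0^t\phi$, $Q\subset\mathbb{R}^N$ bounded open, $\{T(x)\}$ an $N$-dimensional dynamical system on $(\Omega,\mathscr{M},\mu)$, and $f$ satisfying (H$_1$)–(H$_3$). Then for every $\mathbf v\in[\mathcal{C}^\infty(\Omega)\otimes\mathcal{C}(\overline Q;\mathbb{R})]^N$, $$\lim_{\epsilon\to0}\iint_{Q\times\Omega}f(T(\epsilon^{-1}x)\omega,\mathbf v(x,T(\epsilon^{-1}x)\omega))\,dx\,d\mu=\iint_{Q\times\Omega}f(\omega,\mathbf v(x,\omega))\,dx\,d\mu.$$ Furthermore the map $\mathbf v\mapsto f(\cdot,\mathbf v)$, $f(\cdot,\mathbf v)(x,\omega)=f(\omega,\mathbf v(x,\omega))$, from $[\mathcal{C}^\infty(\Omega)\otimes\mathcal{C}(\overline Q;\mathbb{R})]^N$ into $L^1(Q\times\Omega)$ extends by continuity to a map $[L^\Phi(Q\times\Omega)]^N\to L^1(Q\times\Omega)$, and there is $c>0$ such that for all $\mathbf v,\mathbf w\in[L^\Phi(Q\times\Omega)]^N$, $$\|f(\cdot,\mathbf v)-f(\cdot,\mathbf w)\|_{L^1(Q\times\Omega)}\le c\big(\|1\|_{L^{\widetilde\Phi}(Q\times\Omega)}+\|\phi(1+|\mathbf v|+|\mathbf w|)\|_{L^{\widetilde\Phi}(Q\times\Omega)}\big)\|\mathbf v-\mathbf w\|_{L^\Phi(Q\times\Omega)^N}.$$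
   Context: Young function $\Phi=\int_0^t\phi$ ($\phi$ nondecreasing, right continuous, $\phi(0)=0$), conjugate $\widetilde\Phi(t)=\sup_{s\ge0}(st-\Phi(s))$, $\Delta_2$: $\Phi(2t)\le k\Phi(t)$ for $t\ge t_0$; standing assumption $\Phi,\widetilde\Phi\in\Delta'$. Luxemburg norms, $L^\Phi(Q\times\Omega)^N$ normed by sum of component norms. $N$-dimensional dynamical system: invertible bimeasurable maps $T(x)$ of the probability space $(\Omega,\mathscr{M},\mu)$, $T(0)=\mathrm{id}$, group property, $\mu$-preserving, jointly measurable. (H$_1$) $f(\cdot,\lambda)$ measurable for all $\lambda$; (H$_2$) $f(\omega,\cdot)$ strictly convex for a.e. $\omega$; (H$_3$) $c_1\Phi(|\lambda|)\le f(\omega,\lambda)\le c_2(1+\Phi(|\lambda|))$ for all $\lambda$, a.e. $\omega$. $\mathcal{C}^\infty(\Omega)$: elements of $L^\infty(\Omega)$ all of whose iterated stochastic derivatives (strong $L^\infty$-limits of $(f\circ T(te_i)-f)/t$) exist in $L^\infty(\Omega)$; $\mathcal{C}^\infty(\Omega)\otimes\mathcal{C}(\overline Q;\mathbb{R})$: finite sums of products $\psi(\omega)\varphi(x)$. *)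

theory Defs
  imports "HOL-Analysis.Analysis" "HOL-Probability.Probability"
begin

definition young_function :: "(real \<Rightarrow> real) \<Rightarrow> (real \<Rightarrow> real) \<Rightarrow> bool" where
  "young_function \<phi> \<Phi> \<longleftrightarrow>
     mono_on {0..} \<phi> \<and>
     (\<forall>t\<ge>0. continuous (at_right t) \<phi>) \<and>
     \<phi> 0 = 0 \<and>
     (\<forall>t>0. \<phi> t > 0) \<and>
     filterlim \<phi> at_top at_top \<and>
     (\<forall>t\<ge>0. \<Phi> t = integral {0..t} \<phi>)"

definition young_conj :: "(real \<Rightarrow> real) \<Rightarrow> real \<Rightarrow> real" where
  "young_conj \<Phi> t = (SUP s\<in>{0..}. s * t - \<Phi> s)"

definition Delta2 :: "(real \<Rightarrow> real) \<Rightarrow> bool" where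
  "Delta2 \<Phi> \<longleftrightarrow> (\<exists>k>0. \<exists>t0\<ge>0. \<forall>t\<ge>t0. \<Phi> (2 * t) \<le> k * \<Phi> t)"

definition Delta' :: "(real \<Rightarrow> real) \<Rightarrow> bool" where
  "Delta' \<Phi> \<longleftrightarrow> (\<exists>k>0. \<exists>t0\<ge>0. \<forall>t\<ge>t0. \<forall>s\<ge>t0. \<Phi> (t * s) \<le> k * \<Phi> t * \<Phi> s)"

definition orlicz :: "'a measure \<Rightarrow> (real \<Rightarrow> real) \<Rightarrow> ('a \<Rightarrow> real) set" where
  "orlicz X \<Phi> = {u \<in> borel_measurable X.
      \<exists>k>0. (\<integral>\<^sup>+ z. ennreal (\<Phi> (\<bar>u z\<bar> / k)) \<partial>X) < \<infinity>}"

definition lux_norm :: "'a measure \<Rightarrow> (real \<Rightarrow> real) \<Rightarrow> ('a \<Rightarrow> real) \<Rightarrow> real" where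
  "lux_norm X \<Phi> u = Inf {k. k > 0 \<and> (\<integral>\<^sup>+ z. ennreal (\<Phi> (\<bar>u z\<bar> / k)) \<partial>X) \<le> 1}"

definition lux_normN :: "'a measure \<Rightarrow> (real \<Rightarrow> real) \<Rightarrow> ('a \<Rightarrow> real ^ 'n) \<Rightarrow> real" where
  "lux_normN X \<Phi> v = (\<Sum>i\<in>UNIV. lux_norm X \<Phi> (\<lambda>z. v z $ i))"

definition orliczN :: "'a measure \<Rightarrow> (real \<Rightarrow> real) \<Rightarrow> ('a \<Rightarrow> real ^ 'n::finite) set" where
  "orliczN X \<Phi> = {v. \<forall>i. (\<lambda>z. v z $ i) \<in> orlicz X \<Phi>}"

definition dynamical_system :: "'w measure \<Rightarrow> (real ^ 'n \<Rightarrow> 'w \<Rightarrow> 'w) \<Rightarrow> bool" where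
  "dynamical_system M T \<longleftrightarrow>
     (\<forall>x. T x \<in> M \<rightarrow>\<^sub>M M) \<and>
     (\<forall>x. bij_betw (T x) (space M) (space M)) \<and>
     (\<forall>x. \<forall>A\<in>sets M. (\<lambda>\<omega>. T x \<omega>) ` A \<in> sets M) \<and>
     (\<forall>\<omega>\<in>space M. T 0 \<omega> = \<omega>) \<and>
     (\<forall>x y. \<forall>\<omega>\<in>space M. T (x + y) \<omega> = T x (T y \<omega>)) \<and>
     (\<forall>x. distr M M (T x) = M) \<and>
     (\<lambda>p. T (fst p) (snd p)) \<in> (lborel \<Otimes>\<^sub>M M) \<rightarrow>\<^sub>M M"

definition Linf :: "'w measure \<Rightarrow> ('w \<Rightarrow> real) set" where
  "Linf M = {u \<in> borel_measurable M. \<exists>C. AE \<omega> in M. \<bar>u \<omega>\<bar> \<le> C}"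

definition stoch_deriv ::
  "'w measure \<Rightarrow> (real ^ 'n \<Rightarrow> 'w \<Rightarrow> 'w) \<Rightarrow> 'n \<Rightarrow> ('w \<Rightarrow> real) \<Rightarrow> ('w \<Rightarrow> real) \<Rightarrow> bool" where
  "stoch_deriv M T i u g \<longleftrightarrow> u \<in> Linf M \<and> g \<in> Linf M \<and>
     ((\<lambda>t. esssup M (\<lambda>\<omega>. ereal \<bar>(u (T (t *\<^sub>R axis i 1) \<omega>) - u \<omega>) / t - g \<omega>\<bar>))
        \<longlongrightarrow> 0) (at 0)"

inductive iter_sderiv ::
  "'w measure \<Rightarrow> (real ^ 'n \<Rightarrow> 'w \<Rightarrow> 'w) \<Rightarrow> 'n list \<Rightarrow> ('w \<Rightarrow> real) \<Rightarrow> ('w \<Rightarrow> real) \<Rightarrow> bool"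
  for M T where
  Nil: "u \<in> Linf M \<Longrightarrow> iter_sderiv M T [] u u"
| Cons: "stoch_deriv M T i u g \<Longrightarrow> iter_sderiv M T is g h \<Longrightarrow> iter_sderiv M T (i # is) u h"

definition Cinf :: "'w measure \<Rightarrow> (real ^ 'n \<Rightarrow> 'w \<Rightarrow> 'w) \<Rightarrow> ('w \<Rightarrow> real) set" where
  "Cinf M T = {u \<in> Linf M. \<forall>is. \<exists>h. iter_sderiv M T is u h}"

definition tensor_space ::
  "'w measure \<Rightarrow> (real ^ 'n \<Rightarrow> 'w \<Rightarrow> 'w) \<Rightarrow> (real ^ 'n) set \<Rightarrow> ((real ^ 'n) \<times> 'w \<Rightarrow> real) set" where
  "tensor_space M T Q = {v. \<exists>(K::nat) \<psi> \<phi>.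
      (\<forall>k<K. \<psi> k \<in> Cinf M T \<and> continuous_on (closure Q) (\<phi> k)) \<and>
      (\<forall>x\<in>closure Q. \<forall>\<omega>\<in>space M. v (x, \<omega>) = (\<Sum>k<K. \<psi> k \<omega> * \<phi> k x))}"

definition tensor_spaceN ::
  "'w measure \<Rightarrow> (real ^ 'n \<Rightarrow> 'w \<Rightarrow> 'w) \<Rightarrow> (real ^ 'n) set \<Rightarrow> ((real ^ 'n) \<times> 'w \<Rightarrow> real ^ 'n) set" where
  "tensor_spaceN M T Q = {v. \<forall>i. (\<lambda>z. v z $ i) \<in> tensor_space M T Q}"

definition strictly_convex :: "('a::real_vector \<Rightarrow> real) \<Rightarrow> bool" where
  "strictly_convex g \<longleftrightarrow> (\<forall>x y t. x \<noteq> y \<and> 0 < t \<and> t < 1 \<longrightarrow>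
      g ((1 - t) *\<^sub>R x + t *\<^sub>R y) < (1 - t) * g x + t * g y)"

end

theory Submission
  imports Defs
begin

text \<open>Since each \<open>T(x)\<close> preserves \<open>\<mu>\<close>, Fubini shows that
  \<open>(x, \<omega>) \<mapsto> (x, T(x/\<epsilon>) \<omega>)\<close> preserves the measure on \<open>Q \<times> \<Omega>\<close>, so the integrals
  in the limit do not depend on \<open>\<epsilon>\<close> at all.

  For the extension, off a \<open>\<mu>\<close>-null set \<open>f(\<omega>, \<cdot>)\<close> is convex, nonnegative and bounded
  by \<open>c\<^sub>2 (1 + \<Phi>(|\<lambda>|))\<close> (checked on a countable dense set, then extended by
  continuity). Convexity along the line through \<open>\<lambda>\<close> and \<open>\<lambda>'\<close>, together with
  \<open>\<Phi>(t) \<le> t \<phi>(t)\<close> and the \<open>\<Delta>\<^sub>2\<close> bound \<open>\<phi>(2t) \<le> A \<phi>(t) + C\<close>, yields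
  \<open>|f(\<omega>,\<lambda>) - f(\<omega>,\<lambda>')| \<le> c (1 + \<phi>(1 + |\<lambda>| + |\<lambda>'|)) |\<lambda> - \<lambda>'|\<close>.
  The Hoelder inequality pairing \<open>L\<^sup>\<Phi>\<close> with the Orlicz class of \<open>young_conj \<Phi>\<close>
  turns this into the stated \<open>L\<^sup>1\<close> estimate; \<open>\<phi>(1 + |v| + |w|)\<close> lies in that class
  because \<open>young_conj \<Phi> (\<phi> t) \<le> \<Phi> (2 t)\<close>, and its Luxemburg norm stays bounded
  along a convergent sequence, which gives continuity of the extension.\<close>

section \<open>Young functions\<close>

locale young =
  fixes \<phi> \<Phi> :: "real \<Rightarrow> real"
  assumes young_function: "young_function \<phi> \<Phi>"
begin

lemma phi_mono: "0 \<le> x \<Longrightarrow> x \<le> y \<Longrightarrow> \<phi> x \<le> \<phi> y"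
  using young_function unfolding young_function_def by (auto intro: mono_onD)

lemma phi_0 [simp]: "\<phi> 0 = 0"
  using young_function unfolding young_function_def by simp

lemma phi_nonneg: "0 \<le> t \<Longrightarrow> 0 \<le> \<phi> t"
  using phi_mono[of 0 t] by simp

lemma phi_at_top: "filterlim \<phi> at_top at_top"
  using young_function unfolding young_function_def by simp

lemma Phi_eq_integral: "0 \<le> t \<Longrightarrow> \<Phi> t = integral {0..t} \<phi>"
  using young_function unfolding young_function_def by simp

lemma phi_integrable_on:
  assumes "0 \<le> a"
  shows "\<phi> integrable_on {a..b}"
  by (rule integrable_on_mono_on) (use assms in \<open>auto intro!: mono_onI phi_mono\<close>)

lemma Phi_diff_eq_integral:
  assumes "0 \<le> x" "x \<le> y"
  shows "\<Phi> y - \<Phi> x = integral {x..y} \<phi>"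
  using Henstock_Kurzweil_Integration.integral_combine[OF assms phi_integrable_on[of 0 y]] assms
  by (simp add: Phi_eq_integral)

lemma Phi_diff_bounds:
  assumes "0 \<le> x" "x \<le> y"
  shows "(y - x) * \<phi> x \<le> \<Phi> y - \<Phi> x" "\<Phi> y - \<Phi> x \<le> (y - x) * \<phi> y"
proof -
  have bounds: "\<phi> x \<le> \<phi> t" "\<phi> t \<le> \<phi> y" if "t \<in> {x..y}" for t
    using that assms by (auto intro: phi_mono)
  have int: "\<phi> integrable_on {x..y}" using phi_integrable_on assms by simp
  have "integral {x..y} (\<lambda>_. \<phi> x) \<le> integral {x..y} \<phi>"
    by (rule integral_le) (use int bounds in auto)
  then show "(y - x) * \<phi> x \<le> \<Phi> y - \<Phi> x"
    using assms by (simp add: Phi_diff_eq_integral)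
  have "integral {x..y} \<phi> \<le> integral {x..y} (\<lambda>_. \<phi> y)"
    by (rule integral_le) (use int bounds in auto)
  then show "\<Phi> y - \<Phi> x \<le> (y - x) * \<phi> y"
    using assms by (simp add: Phi_diff_eq_integral)
qed

lemma Phi_0 [simp]: "\<Phi> 0 = 0"
  using Phi_eq_integral[of 0] by simp

lemma Phi_nonneg: "0 \<le> t \<Longrightarrow> 0 \<le> \<Phi> t"
  using Phi_diff_bounds(1)[of 0 t] phi_nonneg[of 0] by simp

lemma Phi_mono: "0 \<le> x \<Longrightarrow> x \<le> y \<Longrightarrow> \<Phi> x \<le> \<Phi> y"
  using Phi_diff_bounds(1)[of x y] phi_nonneg[of x] by (smt (verit) mult_nonneg_nonneg)

lemma Phi_le_mult_phi: "0 \<le> x \<Longrightarrow> \<Phi> x \<le> x * \<phi> x"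
  using Phi_diff_bounds(2)[of 0 x] by simp

lemma mult_phi_le_Phi_double: "0 \<le> x \<Longrightarrow> x * \<phi> x \<le> \<Phi> (2 * x)"
  using Phi_diff_bounds(1)[of x "2 * x"] Phi_nonneg[of x] by simp

lemma Phi_mult_le:
  assumes "0 \<le> x" "0 \<le> s" "s \<le> 1"
  shows "\<Phi> (s * x) \<le> s * \<Phi> x"
proof -
  have sx: "0 \<le> s * x" "s * x \<le> x"
    using assms by (auto simp: mult_left_le_one_le)
  have "(1 - s) * \<Phi> (s * x) \<le> (1 - s) * (s * x * \<phi> (s * x))"
    using Phi_le_mult_phi[OF sx(1)] assms by (intro mult_left_mono) auto
  also have "\<dots> = s * ((x - s * x) * \<phi> (s * x))" by (simp add: algebra_simps)
  also have "\<dots> \<le> s * (\<Phi> x - \<Phi> (s * x))"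
    using Phi_diff_bounds(1)[OF sx] assms by (intro mult_left_mono) auto
  finally show ?thesis by (simp add: algebra_simps)
qed

lemma Phi_lipschitz_on:
  assumes "0 \<le> x" "0 \<le> y" "x \<le> b" "y \<le> b"
  shows "\<bar>\<Phi> y - \<Phi> x\<bar> \<le> \<bar>y - x\<bar> * \<phi> b"
proof -
  have "\<Phi> v - \<Phi> u \<le> (v - u) * \<phi> b" if "0 \<le> u" "u \<le> v" "v \<le> b" for u v
    using Phi_diff_bounds(2)[of u v] phi_mono[of v b] that
    by (smt (verit) mult_left_mono)
  from this[of x y] this[of y x] show ?thesis
    using assms Phi_mono[of x y] Phi_mono[of y x] by (cases "x \<le> y") auto
qed

lemma continuous_on_Phi: "continuous_on {0..} \<Phi>"
proof (rule continuous_onI)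
  fix x e :: real
  assume x: "x \<in> {0..}" and e: "0 < e"
  define d where "d = min 1 (e / (\<phi> (x + 1) + 1))"
  have phi_x1: "0 \<le> \<phi> (x + 1)" using phi_nonneg x by simp
  have "d * (\<phi> (x + 1) + 1) \<le> e"
    using e phi_x1 unfolding d_def
    by (smt (verit) divide_pos_pos min.cobounded2 mult_right_mono nonzero_eq_divide_eq)
  moreover have "0 < d" using e phi_x1 by (simp add: d_def)
  ultimately have d: "0 < d" "d * \<phi> (x + 1) \<le> e"
    by (auto simp: distrib_left)
  show "\<exists>d>0. \<forall>y\<in>{0..}. dist y x < d \<longrightarrow> dist (\<Phi> y) (\<Phi> x) \<le> e"
  proof (intro exI[of _ d] conjI ballI impI d(1))
    fix y assume y: "y \<in> {0..}" "dist y x < d"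
    then have "\<bar>y - x\<bar> < d" "y \<le> x + 1" using d_def by (auto simp: dist_real_def)
    then have "\<bar>\<Phi> y - \<Phi> x\<bar> \<le> d * \<phi> (x + 1)"
      using Phi_lipschitz_on[of x y "x + 1"] x y phi_x1
      by (smt (verit) atLeast_iff mult_right_mono)
    with d show "dist (\<Phi> y) (\<Phi> x) \<le> e" by (simp add: dist_real_def)
  qed
qed

lemma Phi_add_le: "0 \<le> a \<Longrightarrow> 0 \<le> b \<Longrightarrow> \<Phi> (a + b) \<le> \<Phi> (2 * a) + \<Phi> (2 * b)"
  using Phi_mono[of "a + b" "2 * a"] Phi_mono[of "a + b" "2 * b"]
    Phi_nonneg[of "2 * a"] Phi_nonneg[of "2 * b"]
  by (cases "a \<le> b") auto

lemma Phi_add3_le: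
  assumes "0 \<le> a" "0 \<le> b" "0 \<le> c"
  shows "\<Phi> (a + b + c) \<le> \<Phi> (3 * a) + \<Phi> (3 * b) + \<Phi> (3 * c)"
proof -
  have "\<Phi> (a + b + c) \<le> \<Phi> (3 * max a (max b c))"
    using assms by (intro Phi_mono) auto
  also have "\<dots> \<le> \<Phi> (3 * a) + \<Phi> (3 * b) + \<Phi> (3 * c)"
    using assms Phi_nonneg[of "3 * a"] Phi_nonneg[of "3 * b"] Phi_nonneg[of "3 * c"]
    by (auto simp: max_def)
  finally show ?thesis .
qed

lemma Phi_norm_le_sum:
  fixes x :: "real ^ 'n"
  assumes "0 \<le> m"
  shows "\<Phi> (m * norm x) \<le> (\<Sum>i\<in>UNIV. \<Phi> (m * CARD('n) * \<bar>x $ i\<bar>))"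
proof -
  have "(MAX i. \<bar>x $ i\<bar>) \<in> range (\<lambda>i. \<bar>x $ i\<bar>)" by (rule Max_in) auto
  then obtain i0 where max_i0: "(MAX i. \<bar>x $ i\<bar>) = \<bar>x $ i0\<bar>" by (metis rangeE)
  have i0: "\<bar>x $ i\<bar> \<le> \<bar>x $ i0\<bar>" for i
    unfolding max_i0[symmetric] by (rule Max_ge) auto
  have "norm x \<le> (\<Sum>i\<in>UNIV. \<bar>x $ i\<bar>)" by (rule norm_le_l1_cart)
  also have "\<dots> \<le> CARD('n) * \<bar>x $ i0\<bar>"
    using sum_mono[of UNIV "\<lambda>i. \<bar>x $ i\<bar>" "\<lambda>_. \<bar>x $ i0\<bar>"] i0 by simp
  finally have "\<Phi> (m * norm x) \<le> \<Phi> (m * CARD('n) * \<bar>x $ i0\<bar>)"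
    using assms by (intro Phi_mono) (auto simp: mult.assoc mult_left_mono)
  also have "\<dots> \<le> (\<Sum>i\<in>UNIV. \<Phi> (m * CARD('n) * \<bar>x $ i\<bar>))"
    by (rule member_le_sum) (use Phi_nonneg assms in auto)
  finally show ?thesis .
qed

lemma conj_bdd_above: "bdd_above ((\<lambda>s. s * t - \<Phi> s) ` {0..})"
proof (cases "t \<le> 0")
  case True
  have "s * t - \<Phi> s \<le> 0" if "0 \<le> s" for s
    using that True Phi_nonneg[OF that] by (smt (verit) mult_nonneg_nonpos)
  then show ?thesis by (intro bdd_aboveI[of _ 0]) auto
next
  case False
  obtain s1 where s1: "0 \<le> s1" "t + 1 \<le> \<phi> s1"
    using phi_at_top unfolding filterlim_at_top eventually_at_top_linorder
    by (metis linear order.trans)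
  have "s * t - \<Phi> s \<le> s1 * (t + 1)" if s: "0 \<le> s" for s
  proof (cases "s \<le> s1")
    case True
    then show ?thesis using False s1(1) Phi_nonneg[OF s]
      by (smt (verit) mult_left_mono mult_right_mono)
  next
    case beyond: False
    have "(s - s1) * (t + 1) \<le> (s - s1) * \<phi> s1" using beyond s1 by (intro mult_left_mono) auto
    also have "\<dots> \<le> \<Phi> s - \<Phi> s1" using Phi_diff_bounds(1)[OF s1(1)] beyond by simp
    finally show ?thesis using Phi_nonneg[OF s1(1)] s by (simp add: algebra_simps)
  qed
  then show ?thesis by (intro bdd_aboveI[of _ "s1 * (t + 1)"]) auto
qed

theorem young_inequality: "0 \<le> s \<Longrightarrow> s * t \<le> \<Phi> s + young_conj \<Phi> t"
  using cSUP_upper[OF _ conj_bdd_above, of s t] unfolding young_conj_def by simp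

lemma conj_nonneg: "0 \<le> young_conj \<Phi> t"
  using young_inequality[of 0 t] by simp

lemma conj_le:
  assumes "\<And>s. 0 \<le> s \<Longrightarrow> s * t - \<Phi> s \<le> B"
  shows "young_conj \<Phi> t \<le> B"
  unfolding young_conj_def by (rule cSUP_least) (use assms in auto)

lemma conj_mono: "t \<le> t' \<Longrightarrow> young_conj \<Phi> t \<le> young_conj \<Phi> t'"
  by (rule conj_le) (smt (verit) young_inequality mult_left_mono)

lemma conj_divide_le:
  assumes "1 \<le> l"
  shows "young_conj \<Phi> (t / l) \<le> young_conj \<Phi> t / l"
proof (rule conj_le)
  fix s :: real
  assume s: "0 \<le> s"
  have "\<Phi> s / l \<le> \<Phi> s"
    using Phi_nonneg[OF s] assms by (simp add: divide_le_eq mult_le_cancel_left1)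
  then have "s * (t / l) - \<Phi> s \<le> (s * t - \<Phi> s) / l" by (simp add: diff_divide_distrib)
  also have "\<dots> \<le> young_conj \<Phi> t / l"
    using young_inequality[OF s, of t] assms by (simp add: divide_right_mono)
  finally show "s * (t / l) - \<Phi> s \<le> young_conj \<Phi> t / l" .
qed

lemma conj_phi_le:
  assumes "0 \<le> x"
  shows "young_conj \<Phi> (\<phi> x) \<le> \<Phi> (2 * x)"
proof (rule conj_le)
  fix s :: real
  assume s: "0 \<le> s"
  have "s * \<phi> x - \<Phi> s \<le> x * \<phi> x - \<Phi> x"
    using Phi_diff_bounds(1)[OF assms, of s] Phi_diff_bounds(2)[OF s, of x]
    by (cases "x \<le> s") (auto simp: algebra_simps)
  also have "\<dots> \<le> \<Phi> (2 * x)" using mult_phi_le_Phi_double[OF assms] Phi_nonneg[OF assms] by simp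
  finally show "s * \<phi> x - \<Phi> s \<le> \<Phi> (2 * x)" .
qed

end

locale young_Delta2 = young +
  assumes Delta2: "Delta2 \<Phi>"
begin

lemma Phi_power2_mult_le:
  obtains K where "0 < K" "\<And>j. \<exists>C\<ge>0. \<forall>t\<ge>0. \<Phi> (2 ^ j * t) \<le> K ^ j * \<Phi> t + C"
proof -
  obtain K t0 where K: "0 < K" "0 \<le> t0" "\<And>t. t \<ge> t0 \<Longrightarrow> \<Phi> (2 * t) \<le> K * \<Phi> t"
    using Delta2 unfolding Delta2_def by auto
  have "\<exists>C\<ge>0. \<forall>t\<ge>0. \<Phi> (2 ^ j * t) \<le> K ^ j * \<Phi> t + C" for j
  proof (induction j)
    case (Suc j)
    then obtain C where C: "C \<ge> 0" "\<And>t. t \<ge> 0 \<Longrightarrow> \<Phi> (2 ^ j * t) \<le> K ^ j * \<Phi> t + C"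
      by auto
    have "\<Phi> (2 ^ Suc j * t) \<le> K ^ Suc j * \<Phi> t + (K * C + \<Phi> (2 * t0))" if t: "0 \<le> t" for t
    proof (cases "t0 \<le> 2 ^ j * t")
      case True
      have "\<Phi> (2 ^ Suc j * t) \<le> K * \<Phi> (2 ^ j * t)" using K(3)[OF True] by (simp add: mult.assoc)
      also have "\<dots> \<le> K * (K ^ j * \<Phi> t + C)" using C(2)[OF t] K by (intro mult_left_mono) auto
      finally show ?thesis using Phi_nonneg[of "2 * t0"] K by (simp add: algebra_simps)
    next
      case False
      then have "\<Phi> (2 ^ Suc j * t) \<le> \<Phi> (2 * t0)" using t by (intro Phi_mono) auto
      moreover have "0 \<le> K ^ Suc j * \<Phi> t" "0 \<le> K * C" using Phi_nonneg[OF t] K C by auto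
      ultimately show ?thesis by linarith
    qed
    moreover have "0 \<le> K * C + \<Phi> (2 * t0)" using K C Phi_nonneg[of "2 * t0"] by simp
    ultimately show ?case by blast
  qed auto
  with K(1) show thesis using that by blast
qed

lemma Phi_mult_le_affine:
  assumes "0 \<le> m"
  obtains A C where "0 \<le> A" "0 \<le> C" "\<And>t. 0 \<le> t \<Longrightarrow> \<Phi> (m * t) \<le> A * \<Phi> t + C"
proof -
  obtain K where K: "0 < K" "\<And>j. \<exists>C\<ge>0. \<forall>t\<ge>0. \<Phi> (2 ^ j * t) \<le> K ^ j * \<Phi> t + C"
    using Phi_power2_mult_le by blast
  obtain j :: nat where j: "m \<le> 2 ^ j"
    using real_arch_pow[of 2 m] by (auto dest: less_imp_le)
  obtain C where C: "0 \<le> C" "\<And>t. 0 \<le> t \<Longrightarrow> \<Phi> (2 ^ j * t) \<le> K ^ j * \<Phi> t + C"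
    using K(2)[of j] by blast
  have "\<Phi> (m * t) \<le> K ^ j * \<Phi> t + C" if "0 \<le> t" for t
    using Phi_mono[of "m * t" "2 ^ j * t"] C(2)[OF that] mult_right_mono[OF j that] assms that
    by simp
  then show thesis using that[of "K ^ j" C] K C by simp
qed

lemma phi_double_le_affine:
  obtains A C where "0 \<le> A" "0 \<le> C" "\<And>t. 1 \<le> t \<Longrightarrow> \<phi> (2 * t) \<le> A * \<phi> t + C"
proof -
  obtain A C where AC: "0 \<le> A" "0 \<le> C" "\<And>t. 0 \<le> t \<Longrightarrow> \<Phi> (4 * t) \<le> A * \<Phi> t + C"
    using Phi_mult_le_affine[of 4] by auto
  have "\<phi> (2 * t) \<le> A * \<phi> t + C" if t: "1 \<le> t" for t
  proof -
    have "t * \<phi> (2 * t) \<le> 2 * t * \<phi> (2 * t)" using phi_nonneg[of "2 * t"] t by simp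
    also have "\<dots> \<le> \<Phi> (4 * t)" using mult_phi_le_Phi_double[of "2 * t"] t by simp
    also have "\<dots> \<le> A * (t * \<phi> t) + C"
      using AC(3)[of t] Phi_le_mult_phi[of t] AC(1) t by (smt (verit) mult_left_mono)
    also have "\<dots> \<le> t * (A * \<phi> t + C)"
      using AC(2) t by (simp add: algebra_simps mult_le_cancel_left1)
    finally show ?thesis using t by (simp add: mult_le_cancel_left_pos)
  qed
  then show thesis using that AC by blast
qed

end

section \<open>Orlicz classes and the Luxemburg norm\<close>

lemma borel_measurable_mono_on_comp:
  fixes h :: "real \<Rightarrow> real"
  assumes "mono_on {0..} h" "g \<in> borel_measurable X" "\<And>z. z \<in> space X \<Longrightarrow> 0 \<le> g z"
  shows "(\<lambda>z. h (g z)) \<in> borel_measurable X"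
proof -
  define h' where "h' t = h (max 0 t)" for t
  have "mono h'"
    unfolding h'_def by (intro monoI mono_onD[OF assms(1)]) auto
  then have "h' \<in> borel_measurable borel" by (rule borel_measurable_mono)
  then have "(\<lambda>z. h' (g z)) \<in> borel_measurable X" using assms(2) by measurable
  then show ?thesis
    by (rule measurable_cong[THEN iffD1, rotated]) (use assms(3) in \<open>auto simp: h'_def\<close>)
qed

lemma integrable_nonneg_dominated:
  fixes f g :: "'a \<Rightarrow> real"
  assumes "integrable X g" "f \<in> borel_measurable X" "\<And>z. 0 \<le> f z" "\<And>z. f z \<le> g z"
  shows "integrable X f"
proof (rule Bochner_Integration.integrable_bound[OF assms(1,2)])
  show "AE z in X. norm (f z) \<le> norm (g z)"
    using assms(3,4) by (intro AE_I2) (smt (verit) real_norm_def)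
qed

lemma integrable_if_nn_integral_le:
  assumes "g \<in> borel_measurable X" "\<And>z. z \<in> space X \<Longrightarrow> 0 \<le> g z"
    "(\<integral>\<^sup>+ z. ennreal (g z) \<partial>X) \<le> ennreal B" "0 \<le> B"
  shows "integrable X g" "integral\<^sup>L X g \<le> B"
proof -
  have ae: "AE z in X. 0 \<le> g z" using assms(2) by (rule AE_I2)
  have "(\<integral>\<^sup>+ z. ennreal (g z) \<partial>X) < \<infinity>" using assms(3) by (simp add: le_less_trans)
  then have "(\<integral>\<^sup>+ z. ennreal (g z) \<partial>X) = ennreal (enn2real (\<integral>\<^sup>+ z. ennreal (g z) \<partial>X))"
    by (simp add: less_top)
  then show int: "integrable X g"
    by (rule integrableI_nn_integral_finite[OF assms(1) ae])
  show "integral\<^sup>L X g \<le> B"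
    using nn_integral_eq_integral[OF int ae] assms(3,4) by simp
qed

lemma nn_integral_finite_if_dominated:
  assumes "integrable X g" "\<And>z. 0 \<le> h z" "\<And>z. h z \<le> g z"
  shows "(\<integral>\<^sup>+ z. ennreal (h z) \<partial>X) < \<infinity>"
proof -
  have "(\<integral>\<^sup>+ z. ennreal (h z) \<partial>X) \<le> (\<integral>\<^sup>+ z. ennreal (g z) \<partial>X)"
    by (rule nn_integral_mono) (use assms(3) in \<open>simp add: ennreal_leI\<close>)
  also have "\<dots> = ennreal (integral\<^sup>L X g)"
    by (rule nn_integral_eq_integral[OF assms(1)]) (use assms(2,3) in \<open>auto intro: order_trans\<close>)
  finally show ?thesis by (simp add: le_less_trans)
qed

lemma orlicz_measurable: "u \<in> orlicz X G \<Longrightarrow> u \<in> borel_measurable X"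
  unfolding orlicz_def by auto

lemma orliczN_measurable:
  fixes v :: "'a \<Rightarrow> real ^ 'n"
  assumes "v \<in> orliczN X G"
  shows "v \<in> borel_measurable X"
proof -
  have "(\<lambda>z. \<Sum>i\<in>UNIV. v z $ i *\<^sub>R (axis i 1 :: real ^ 'n)) \<in> borel_measurable X"
    using assms by (intro borel_measurable_sum borel_measurable_scaleR)
      (auto simp: orliczN_def intro: orlicz_measurable)
  moreover have "(\<Sum>i\<in>UNIV. v z $ i *\<^sub>R axis i 1) = v z" for z
    using basis_expansion[of "v z"] by (simp add: scalar_mult_eq_scaleR)
  ultimately show ?thesis by simp
qed

text \<open>The properties of a Young function that the Luxemburg norm relies on; both \<open>\<Phi>\<close> and
  its conjugate have them.\<close>

locale orlicz_gauge =
  fixes G :: "real \<Rightarrow> real"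
  assumes mono: "0 \<le> x \<Longrightarrow> x \<le> y \<Longrightarrow> G x \<le> G y"
    and nonneg: "0 \<le> t \<Longrightarrow> 0 \<le> G t"
    and divide_le: "0 \<le> t \<Longrightarrow> 1 \<le> l \<Longrightarrow> G (t / l) \<le> G t / l"
begin

lemma measurable_comp_abs_divide:
  assumes "u \<in> borel_measurable X" "0 \<le> k"
  shows "(\<lambda>z. G (\<bar>u z\<bar> / k)) \<in> borel_measurable X"
  by (rule borel_measurable_mono_on_comp) (use assms in \<open>auto intro: mono_onI mono\<close>)

lemma orliczI_dominated:
  assumes "u \<in> borel_measurable X" "integrable X g" "\<And>z. G \<bar>u z\<bar> \<le> g z"
  shows "u \<in> orlicz X G"
proof -
  have "(\<integral>\<^sup>+ z. ennreal (G (\<bar>u z\<bar> / 1)) \<partial>X) < \<infinity>"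
    by (rule nn_integral_finite_if_dominated[OF assms(2)]) (use assms(3) nonneg in auto)
  with assms(1) show ?thesis unfolding orlicz_def by (intro CollectI conjI exI[of _ 1]) auto
qed

lemma const_orlicz: "finite_measure X \<Longrightarrow> (\<lambda>_. c) \<in> orlicz X G"
  by (rule orliczI_dominated[where g = "\<lambda>_. G \<bar>c\<bar>"]) (auto intro: finite_measure.integrable_const)

lemma orlicz_modular_le_1:
  assumes u: "u \<in> orlicz X G"
  shows "\<exists>k>0. (\<integral>\<^sup>+ z. ennreal (G (\<bar>u z\<bar> / k)) \<partial>X) \<le> 1"
proof -
  obtain k where k: "0 < k" "(\<integral>\<^sup>+ z. ennreal (G (\<bar>u z\<bar> / k)) \<partial>X) < \<infinity>"
    using u unfolding orlicz_def by auto
  define I where "I = (\<integral>\<^sup>+ z. ennreal (G (\<bar>u z\<bar> / k)) \<partial>X)"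
  define l where "l = max 1 (enn2real I)"
  have "I = ennreal (enn2real I)" using k(2) unfolding I_def by (simp add: less_top)
  also have "\<dots> \<le> ennreal l" unfolding l_def by (intro ennreal_leI) simp
  finally have l: "1 \<le> l" "I \<le> ennreal l" unfolding l_def by simp_all
  have "(\<integral>\<^sup>+ z. ennreal (G (\<bar>u z\<bar> / (k * l))) \<partial>X)
      \<le> (\<integral>\<^sup>+ z. ennreal (1 / l) * ennreal (G (\<bar>u z\<bar> / k)) \<partial>X)"
  proof (rule nn_integral_mono)
    fix z
    have "G (\<bar>u z\<bar> / (k * l)) \<le> G (\<bar>u z\<bar> / k) / l"
      using divide_le[of "\<bar>u z\<bar> / k" l] k l by simp
    then show "ennreal (G (\<bar>u z\<bar> / (k * l))) \<le> ennreal (1 / l) * ennreal (G (\<bar>u z\<bar> / k))"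
      using l nonneg[of "\<bar>u z\<bar> / k"] k by (simp add: ennreal_mult'[symmetric] ennreal_leI)
  qed
  also have "\<dots> = ennreal (1 / l) * I" unfolding I_def
    by (rule nn_integral_cmult) (use measurable_comp_abs_divide[OF orlicz_measurable[OF u]] k in auto)
  also have "\<dots> \<le> ennreal (1 / l) * ennreal l" using l(2) by (rule mult_left_mono) auto
  also have "\<dots> = 1" using l by (simp add: ennreal_mult'[symmetric])
  finally show ?thesis using k l by (intro exI[of _ "k * l"]) auto
qed

lemma lux_norm_nonneg:
  assumes "u \<in> orlicz X G"
  shows "0 \<le> lux_norm X G u"
  unfolding lux_norm_def
  by (rule cInf_greatest) (use orlicz_modular_le_1[OF assms] in auto)

lemma lux_norm_le:
  "0 < a \<Longrightarrow> (\<integral>\<^sup>+ z. ennreal (G (\<bar>u z\<bar> / a)) \<partial>X) \<le> 1 \<Longrightarrow> lux_norm X G u \<le> a"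
  unfolding lux_norm_def by (rule cInf_lower) (auto intro!: exI[of _ 0] simp: bdd_below_def)

lemma modular_le_1_if_lux_norm_less:
  assumes u: "u \<in> orlicz X G" and less: "lux_norm X G u < a"
  shows "(\<integral>\<^sup>+ z. ennreal (G (\<bar>u z\<bar> / a)) \<partial>X) \<le> 1"
proof -
  define S where "S = {k. 0 < k \<and> (\<integral>\<^sup>+ z. ennreal (G (\<bar>u z\<bar> / k)) \<partial>X) \<le> 1}"
  have "S \<noteq> {}" using orlicz_modular_le_1[OF u] unfolding S_def by blast
  moreover have "Inf S < a" using less unfolding S_def lux_norm_def .
  ultimately obtain k where "k \<in> S" "k < a" by (rule cInf_lessD[elim_format]) blast
  then have k: "0 < k" "k < a" "(\<integral>\<^sup>+ z. ennreal (G (\<bar>u z\<bar> / k)) \<partial>X) \<le> 1"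
    unfolding S_def by auto
  have "G (\<bar>u z\<bar> / a) \<le> G (\<bar>u z\<bar> / k)" for z
    using k by (intro mono) (auto intro: divide_left_mono)
  then have "(\<integral>\<^sup>+ z. ennreal (G (\<bar>u z\<bar> / a)) \<partial>X) \<le> (\<integral>\<^sup>+ z. ennreal (G (\<bar>u z\<bar> / k)) \<partial>X)"
    by (intro nn_integral_mono ennreal_leI)
  with k(3) show ?thesis by simp
qed

lemma modular_integrable_le_1:
  assumes u: "u \<in> orlicz X G" and m: "0 < m" and less: "lux_norm X G u < 1 / m"
  shows "integrable X (\<lambda>z. G (m * \<bar>u z\<bar>))" "(\<integral>z. G (m * \<bar>u z\<bar>) \<partial>X) \<le> 1"
proof -
  have le: "(\<integral>\<^sup>+ z. ennreal (G (m * \<bar>u z\<bar>)) \<partial>X) \<le> ennreal 1"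
    using modular_le_1_if_lux_norm_less[OF u less] by (simp add: mult.commute)
  have meas: "(\<lambda>z. G (m * \<bar>u z\<bar>)) \<in> borel_measurable X"
    using measurable_comp_abs_divide[OF orlicz_measurable[OF u], of "1 / m"] m
    by (simp add: mult.commute)
  have "0 \<le> G (m * \<bar>u z\<bar>)" for z using nonneg m by simp
  from integrable_if_nn_integral_le[OF meas this le]
  show "integrable X (\<lambda>z. G (m * \<bar>u z\<bar>))" "(\<integral>z. G (m * \<bar>u z\<bar>) \<partial>X) \<le> 1" by simp_all
qed

end

sublocale young \<subseteq> Phi: orlicz_gauge \<Phi>
proof
  fix t l :: real
  assume "0 \<le> t" "1 \<le> l"
  then show "\<Phi> (t / l) \<le> \<Phi> t / l" using Phi_mult_le[of t "1 / l"] by simp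
qed (fact Phi_mono Phi_nonneg)+

sublocale young \<subseteq> conj: orlicz_gauge "young_conj \<Phi>"
  by unfold_locales (simp_all add: conj_mono conj_nonneg conj_divide_le)

context young
begin

lemma holder_inequality_bound:
  assumes u: "u \<in> orlicz X (young_conj \<Phi>)" and h: "h \<in> orlicz X \<Phi>"
    and a: "lux_norm X (young_conj \<Phi>) u < a" and b: "lux_norm X \<Phi> h < b"
  shows "integrable X (\<lambda>z. u z * h z)" "(\<integral>z. \<bar>u z * h z\<bar> \<partial>X) \<le> 2 * a * b"
proof -
  have a0: "0 < a" using conj.lux_norm_nonneg[OF u] a by linarith
  have b0: "0 < b" using Phi.lux_norm_nonneg[OF h] b by linarith
  define g where "g z = young_conj \<Phi> (\<bar>u z\<bar> / a) + \<Phi> (\<bar>h z\<bar> / b)" for z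
  have meas: "(\<lambda>z. young_conj \<Phi> (\<bar>u z\<bar> / a)) \<in> borel_measurable X"
    "(\<lambda>z. \<Phi> (\<bar>h z\<bar> / b)) \<in> borel_measurable X"
    using conj.measurable_comp_abs_divide[OF orlicz_measurable[OF u]]
      Phi.measurable_comp_abs_divide[OF orlicz_measurable[OF h]] a0 b0 by auto
  have int_u: "integrable X (\<lambda>z. young_conj \<Phi> (\<bar>u z\<bar> / a))"
      "(\<integral>z. young_conj \<Phi> (\<bar>u z\<bar> / a) \<partial>X) \<le> 1"
    using integrable_if_nn_integral_le[OF meas(1), of 1]
      conj.modular_le_1_if_lux_norm_less[OF u a] conj_nonneg by simp_all
  have int_h: "integrable X (\<lambda>z. \<Phi> (\<bar>h z\<bar> / b))" "(\<integral>z. \<Phi> (\<bar>h z\<bar> / b) \<partial>X) \<le> 1"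
    using integrable_if_nn_integral_le[OF meas(2), of 1]
      Phi.modular_le_1_if_lux_norm_less[OF h b] Phi_nonneg b0 by simp_all
  have int_g: "integrable X (\<lambda>z. a * b * g z)" using int_u int_h unfolding g_def by auto
  have pointwise: "\<bar>u z * h z\<bar> \<le> a * b * g z" for z
  proof -
    have "(\<bar>h z\<bar> / b) * (\<bar>u z\<bar> / a) \<le> g z"
      using young_inequality[of "\<bar>h z\<bar> / b" "\<bar>u z\<bar> / a"] b0 unfolding g_def by simp
    then show ?thesis using a0 b0 by (simp add: abs_mult field_simps)
  qed
  show int: "integrable X (\<lambda>z. u z * h z)"
  proof (rule Bochner_Integration.integrable_bound[OF int_g])
    show "(\<lambda>z. u z * h z) \<in> borel_measurable X"
      using orlicz_measurable[OF u] orlicz_measurable[OF h] by measurable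
    show "AE z in X. norm (u z * h z) \<le> norm (a * b * g z)"
      using pointwise by (intro AE_I2) (smt (verit) real_norm_def)
  qed
  have "(\<integral>z. \<bar>u z * h z\<bar> \<partial>X) \<le> (\<integral>z. a * b * g z \<partial>X)"
    by (rule integral_mono[OF _ int_g pointwise]) (use int in auto)
  also have "\<dots> \<le> a * b * 2"
    using int_u int_h a0 b0 unfolding g_def by (simp add: mult_left_mono)
  finally show "(\<integral>z. \<bar>u z * h z\<bar> \<partial>X) \<le> 2 * a * b" by simp
qed

theorem holder_inequality:
  assumes u: "u \<in> orlicz X (young_conj \<Phi>)" and h: "h \<in> orlicz X \<Phi>"
  shows "integrable X (\<lambda>z. u z * h z)"
    "(\<integral>z. \<bar>u z * h z\<bar> \<partial>X) \<le> 2 * lux_norm X (young_conj \<Phi>) u * lux_norm X \<Phi> h"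
proof -
  let ?A = "lux_norm X (young_conj \<Phi>) u" and ?B = "lux_norm X \<Phi> h"
  show "integrable X (\<lambda>z. u z * h z)"
    using holder_inequality_bound(1)[OF u h, of "?A + 1" "?B + 1"] by simp
  have lim: "((\<lambda>d. 2 * (?A + d) * (?B + d)) \<longlongrightarrow> 2 * (?A + 0) * (?B + 0)) (at_right 0)"
    by (intro tendsto_intros)
  have "\<forall>\<^sub>F d in at_right 0. (\<integral>z. \<bar>u z * h z\<bar> \<partial>X) \<le> 2 * (?A + d) * (?B + d)"
  proof (rule eventually_at_rightI[of 0 1])
    fix d :: real
    assume "d \<in> {0<..<1}"
    then show "(\<integral>z. \<bar>u z * h z\<bar> \<partial>X) \<le> 2 * (?A + d) * (?B + d)"
      using holder_inequality_bound(2)[OF u h, of "?A + d" "?B + d"] by simp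
  qed simp
  from tendsto_le[OF _ lim tendsto_const this]
  show "(\<integral>z. \<bar>u z * h z\<bar> \<partial>X) \<le> 2 * ?A * ?B" by simp
qed

lemma weighted_holder_inequality:
  assumes X: "finite_measure X" and u: "u \<in> orlicz X (young_conj \<Phi>)" and h: "h \<in> orlicz X \<Phi>"
  shows "integrable X (\<lambda>z. \<bar>h z\<bar> + \<bar>u z * h z\<bar>)"
    "(\<integral>z. \<bar>h z\<bar> + \<bar>u z * h z\<bar> \<partial>X)
      \<le> 2 * (lux_norm X (young_conj \<Phi>) (\<lambda>_. 1) + lux_norm X (young_conj \<Phi>) u) * lux_norm X \<Phi> h"
proof -
  note one = holder_inequality[OF conj.const_orlicz[OF X] h, of 1]
    and weight = holder_inequality[OF u h]
  show "integrable X (\<lambda>z. \<bar>h z\<bar> + \<bar>u z * h z\<bar>)" using one(1) weight(1) by auto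
  then show "(\<integral>z. \<bar>h z\<bar> + \<bar>u z * h z\<bar> \<partial>X)
      \<le> 2 * (lux_norm X (young_conj \<Phi>) (\<lambda>_. 1) + lux_norm X (young_conj \<Phi>) u) * lux_norm X \<Phi> h"
    using one weight by (simp add: algebra_simps)
qed

lemma phi_comp_orlicz_conj:
  assumes X: "finite_measure X" and U: "U \<in> borel_measurable X" "\<And>z. 0 \<le> U z"
    and int: "integrable X (\<lambda>z. \<Phi> (2 * U z))"
  shows "(\<lambda>z. \<phi> (U z)) \<in> orlicz X (young_conj \<Phi>)"
    "lux_norm X (young_conj \<Phi>) (\<lambda>z. \<phi> (U z)) \<le> max 1 (\<integral>z. \<Phi> (2 * U z) \<partial>X)"
proof -
  have conj_phi: "young_conj \<Phi> \<bar>\<phi> (U z)\<bar> \<le> \<Phi> (2 * U z)" for z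
    using conj_phi_le[OF U(2)] phi_nonneg[OF U(2)] by simp
  have "(\<lambda>z. \<phi> (U z)) \<in> borel_measurable X"
    by (rule borel_measurable_mono_on_comp) (use U in \<open>auto intro: mono_onI phi_mono\<close>)
  then show u: "(\<lambda>z. \<phi> (U z)) \<in> orlicz X (young_conj \<Phi>)"
    by (rule conj.orliczI_dominated[OF _ int conj_phi])
  define l where "l = max 1 (\<integral>z. \<Phi> (2 * U z) \<partial>X)"
  have l: "1 \<le> l" unfolding l_def by simp
  have "(\<integral>\<^sup>+ z. ennreal (young_conj \<Phi> (\<bar>\<phi> (U z)\<bar> / l)) \<partial>X)
      \<le> (\<integral>\<^sup>+ z. ennreal (\<Phi> (2 * U z) / l) \<partial>X)"
    using conj_divide_le[OF l] conj_phi l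
    by (intro nn_integral_mono ennreal_leI) (smt (verit) divide_right_mono)
  also have "\<dots> = ennreal ((\<integral>z. \<Phi> (2 * U z) \<partial>X) / l)"
    using int U(2) l by (subst nn_integral_eq_integral) (auto intro!: divide_nonneg_nonneg Phi_nonneg)
  also have "\<dots> \<le> 1" using l by (simp add: l_def divide_le_eq)
  finally show "lux_norm X (young_conj \<Phi>) (\<lambda>z. \<phi> (U z)) \<le> max 1 (\<integral>z. \<Phi> (2 * U z) \<partial>X)"
    using conj.lux_norm_le[of l] l unfolding l_def by simp
qed

end

context young_Delta2
begin

lemma orlicz_Phi_integrable:
  assumes X: "finite_measure X" and u: "u \<in> orlicz X \<Phi>" and m: "0 \<le> m"
  shows "integrable X (\<lambda>z. \<Phi> (m * \<bar>u z\<bar>))"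
proof -
  obtain k where k: "0 < k" "(\<integral>\<^sup>+ z. ennreal (\<Phi> (\<bar>u z\<bar> / k)) \<partial>X) \<le> 1"
    using Phi.orlicz_modular_le_1[OF u] by auto
  have meas: "(\<lambda>z. \<Phi> (\<bar>u z\<bar> / k)) \<in> borel_measurable X"
    using Phi.measurable_comp_abs_divide[OF orlicz_measurable[OF u]] k by simp
  have int: "integrable X (\<lambda>z. \<Phi> (\<bar>u z\<bar> / k))"
    using integrable_if_nn_integral_le(1)[OF meas _, of 1] k Phi_nonneg by simp
  obtain A C where AC: "0 \<le> A" "0 \<le> C" "\<And>t. 0 \<le> t \<Longrightarrow> \<Phi> (m * k * t) \<le> A * \<Phi> t + C"
    using Phi_mult_le_affine[of "m * k"] m k by auto
  show ?thesis
  proof (rule integrable_nonneg_dominated)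
    show "integrable X (\<lambda>z. A * \<Phi> (\<bar>u z\<bar> / k) + C)"
      by (intro Bochner_Integration.integrable_add integrable_mult_right int
          finite_measure.integrable_const[OF X])
    show "(\<lambda>z. \<Phi> (m * \<bar>u z\<bar>)) \<in> borel_measurable X"
      by (rule borel_measurable_mono_on_comp)
        (use orlicz_measurable[OF u] m in \<open>auto intro: mono_onI Phi_mono\<close>)
    show "0 \<le> \<Phi> (m * \<bar>u z\<bar>)" for z using Phi_nonneg m by simp
    show "\<Phi> (m * \<bar>u z\<bar>) \<le> A * \<Phi> (\<bar>u z\<bar> / k) + C" for z
      using AC(3)[of "\<bar>u z\<bar> / k"] k by simp
  qed
qed

lemma orliczN_Phi_integrable:
  fixes v :: "'a \<Rightarrow> real ^ 'n"
  assumes X: "finite_measure X" and v: "v \<in> orliczN X \<Phi>" and m: "0 \<le> m"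
  shows "integrable X (\<lambda>z. \<Phi> (m * norm (v z)))"
proof (rule integrable_nonneg_dominated)
  show "integrable X (\<lambda>z. \<Sum>i\<in>UNIV. \<Phi> (m * CARD('n) * \<bar>v z $ i\<bar>))"
    using v m by (intro Bochner_Integration.integrable_sum orlicz_Phi_integrable[OF X])
      (auto simp: orliczN_def)
  show "(\<lambda>z. \<Phi> (m * norm (v z))) \<in> borel_measurable X"
    by (rule borel_measurable_mono_on_comp)
      (use orliczN_measurable[OF v] m in \<open>auto intro: mono_onI Phi_mono\<close>)
  show "0 \<le> \<Phi> (m * norm (v z))" for z using Phi_nonneg m by simp
  show "\<Phi> (m * norm (v z)) \<le> (\<Sum>i\<in>UNIV. \<Phi> (m * CARD('n) * \<bar>v z $ i\<bar>))" for z
    by (rule Phi_norm_le_sum[OF m])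
qed

lemma orlicz_diff:
  assumes X: "finite_measure X" and u: "u \<in> orlicz X \<Phi>" and w: "w \<in> orlicz X \<Phi>"
  shows "(\<lambda>z. u z - w z) \<in> orlicz X \<Phi>"
proof (rule Phi.orliczI_dominated)
  show "(\<lambda>z. u z - w z) \<in> borel_measurable X"
    using orlicz_measurable[OF u] orlicz_measurable[OF w] by measurable
  show "integrable X (\<lambda>z. \<Phi> (2 * \<bar>u z\<bar>) + \<Phi> (2 * \<bar>w z\<bar>))"
    using orlicz_Phi_integrable[OF X u, of 2] orlicz_Phi_integrable[OF X w, of 2] by auto
  show "\<Phi> \<bar>u z - w z\<bar> \<le> \<Phi> (2 * \<bar>u z\<bar>) + \<Phi> (2 * \<bar>w z\<bar>)" for z
    using Phi_mono[OF abs_ge_zero abs_triangle_ineq4[of "u z" "w z"]]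
      Phi_add_le[of "\<bar>u z\<bar>" "\<bar>w z\<bar>"] by simp
qed

lemma orliczN_diff:
  "finite_measure X \<Longrightarrow> v \<in> orliczN X \<Phi> \<Longrightarrow> w \<in> orliczN X \<Phi> \<Longrightarrow> (\<lambda>z. v z - w z) \<in> orliczN X \<Phi>"
  using orlicz_diff[of X "\<lambda>z. v z $ _" "\<lambda>z. w z $ _"] unfolding orliczN_def by auto

lemma integrable_Phi_double_norm_sum:
  fixes v w :: "'a \<Rightarrow> real ^ 'n"
  assumes X: "finite_measure X" and v: "v \<in> orliczN X \<Phi>" and w: "w \<in> orliczN X \<Phi>"
  shows "integrable X (\<lambda>z. \<Phi> (2 * (1 + norm (v z) + norm (w z))))"
proof (rule integrable_nonneg_dominated)
  show "integrable X (\<lambda>z. \<Phi> 6 + \<Phi> (6 * norm (v z)) + \<Phi> (6 * norm (w z)))"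
    by (intro Bochner_Integration.integrable_add finite_measure.integrable_const[OF X]
        orliczN_Phi_integrable[OF X v] orliczN_Phi_integrable[OF X w]) simp_all
  have "(\<lambda>z. 2 * (1 + norm (v z) + norm (w z))) \<in> borel_measurable X"
    using orliczN_measurable[OF v] orliczN_measurable[OF w] by measurable
  then show "(\<lambda>z. \<Phi> (2 * (1 + norm (v z) + norm (w z)))) \<in> borel_measurable X"
    by (rule borel_measurable_mono_on_comp[rotated]) (auto intro: mono_onI Phi_mono)
  have "\<Phi> (2 * (1 + norm (v z) + norm (w z))) \<le> \<Phi> 6 + \<Phi> (6 * norm (v z)) + \<Phi> (6 * norm (w z))" for z
    using Phi_add3_le[of 2 "2 * norm (v z)" "2 * norm (w z)"] by (simp add: algebra_simps)
  then show "\<Phi> (2 * (1 + norm (v z) + norm (w z))) \<le> \<Phi> 6 + \<Phi> (6 * norm (v z)) + \<Phi> (6 * norm (w z))"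
    for z .
  show "0 \<le> \<Phi> (2 * (1 + norm (v z) + norm (w z)))" for z by (simp add: Phi_nonneg)
qed

section \<open>Lipschitz estimates in Orlicz spaces\<close>

lemma lux_normN_nonneg: "v \<in> orliczN X \<Phi> \<Longrightarrow> 0 \<le> lux_normN X \<Phi> v"
  unfolding lux_normN_def orliczN_def by (auto intro: sum_nonneg Phi.lux_norm_nonneg)

lemma lux_norm_component_le_lux_normN:
  "v \<in> orliczN X \<Phi> \<Longrightarrow> lux_norm X \<Phi> (\<lambda>p. v p $ i) \<le> lux_normN X \<Phi> v"
  unfolding lux_normN_def orliczN_def by (rule member_le_sum) (auto intro: Phi.lux_norm_nonneg)

lemma weighted_norm_diff_integral_le:
  fixes v w :: "'a \<Rightarrow> real ^ 'n"
  defines "U \<equiv> \<lambda>p. 1 + norm (v p) + norm (w p)"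
  assumes X: "finite_measure X" and v: "v \<in> orliczN X \<Phi>" and w: "w \<in> orliczN X \<Phi>"
  shows "integrable X (\<lambda>p. (1 + \<phi> (U p)) * norm (v p - w p))"
    "(\<integral>p. (1 + \<phi> (U p)) * norm (v p - w p) \<partial>X)
      \<le> 2 * (lux_norm X (young_conj \<Phi>) (\<lambda>_. 1) + lux_norm X (young_conj \<Phi>) (\<lambda>p. \<phi> (U p)))
         * lux_normN X \<Phi> (\<lambda>p. v p - w p)"
proof -
  define h where "h i p = v p $ i - w p $ i" for i p
  define R where "R p = (\<Sum>i\<in>UNIV. \<bar>h i p\<bar> + \<bar>\<phi> (U p) * h i p\<bar>)" for p
  have h: "h i \<in> orlicz X \<Phi>" for i
    using orliczN_diff[OF X v w] unfolding h_def orliczN_def by simp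
  have "U \<in> borel_measurable X"
    unfolding U_def using orliczN_measurable[OF v] orliczN_measurable[OF w] by measurable
  then have phi_U: "(\<lambda>p. \<phi> (U p)) \<in> orlicz X (young_conj \<Phi>)"
    using phi_comp_orlicz_conj(1)[OF X] integrable_Phi_double_norm_sum[OF X v w]
    unfolding U_def by simp
  note components = weighted_holder_inequality[OF X phi_U h]
  have R: "integrable X R" unfolding R_def using components(1) by auto
  have pointwise: "(1 + \<phi> (U p)) * norm (v p - w p) \<le> R p" for p
  proof -
    have "norm (v p - w p) \<le> (\<Sum>i\<in>UNIV. \<bar>h i p\<bar>)"
      using norm_le_l1_cart[of "v p - w p"] unfolding h_def by simp
    moreover have "0 \<le> \<phi> (U p)" unfolding U_def by (simp add: phi_nonneg)
    ultimately have "(1 + \<phi> (U p)) * norm (v p - w p) \<le> (1 + \<phi> (U p)) * (\<Sum>i\<in>UNIV. \<bar>h i p\<bar>)"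
      by (intro mult_left_mono) auto
    also have "\<dots> = R p"
      unfolding R_def using \<open>0 \<le> \<phi> (U p)\<close>
      by (simp add: sum_distrib_left sum.distrib abs_mult distrib_right)
    finally show ?thesis .
  qed
  show int: "integrable X (\<lambda>p. (1 + \<phi> (U p)) * norm (v p - w p))"
  proof (rule integrable_nonneg_dominated[OF R _ _ pointwise])
    show "(\<lambda>p. (1 + \<phi> (U p)) * norm (v p - w p)) \<in> borel_measurable X"
      using phi_U orliczN_measurable[OF v] orliczN_measurable[OF w]
      by (measurable, auto intro: orlicz_measurable)
    show "0 \<le> (1 + \<phi> (U p)) * norm (v p - w p)" for p unfolding U_def by (simp add: phi_nonneg)
  qed
  have "(\<integral>p. (1 + \<phi> (U p)) * norm (v p - w p) \<partial>X) \<le> (\<integral>p. R p \<partial>X)"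
    by (rule integral_mono[OF int R pointwise])
  also have "\<dots> \<le> (\<Sum>i\<in>UNIV. 2 * (lux_norm X (young_conj \<Phi>) (\<lambda>_. 1)
      + lux_norm X (young_conj \<Phi>) (\<lambda>p. \<phi> (U p))) * lux_norm X \<Phi> (h i))"
    unfolding R_def using components by (simp add: Bochner_Integration.integral_sum sum_mono)
  finally show "(\<integral>p. (1 + \<phi> (U p)) * norm (v p - w p) \<partial>X)
      \<le> 2 * (lux_norm X (young_conj \<Phi>) (\<lambda>_. 1) + lux_norm X (young_conj \<Phi>) (\<lambda>p. \<phi> (U p)))
        * lux_normN X \<Phi> (\<lambda>p. v p - w p)"
    unfolding lux_normN_def h_def by (simp add: sum_distrib_left)
qed

lemma integral_Phi_double_norm_sum_le:
  fixes v w :: "'a \<Rightarrow> real ^ 'n"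
  assumes X: "finite_measure X" and v: "v \<in> orliczN X \<Phi>" and w: "w \<in> orliczN X \<Phi>"
    and close: "\<And>i. lux_norm X \<Phi> (\<lambda>p. w p $ i - v p $ i) < 1 / (6 * real CARD('n))"
  shows "(\<integral>p. \<Phi> (2 * (1 + norm (w p) + norm (v p))) \<partial>X)
    \<le> (\<integral>p. \<Phi> 6 \<partial>X) + CARD('n) + (\<integral>p. \<Phi> (12 * norm (v p)) \<partial>X)"
proof -
  define m where "m = 6 * real CARD('n)"
  define h where "h i p = w p $ i - v p $ i" for i p
  have m: "0 < m" unfolding m_def by simp
  have h: "h i \<in> orlicz X \<Phi>" for i
    using orliczN_diff[OF X w v] unfolding h_def orliczN_def by simp
  note small = Phi.modular_integrable_le_1[OF h m close[folded m_def h_def]]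
  have int_v: "integrable X (\<lambda>p. \<Phi> (12 * norm (v p)))" by (rule orliczN_Phi_integrable[OF X v]) simp
  have int_c: "integrable X (\<lambda>p. \<Phi> 6)" by (rule finite_measure.integrable_const[OF X])
  have pointwise: "\<Phi> (2 * (1 + norm (w p) + norm (v p)))
      \<le> \<Phi> 6 + (\<Sum>i\<in>UNIV. \<Phi> (m * \<bar>h i p\<bar>)) + \<Phi> (12 * norm (v p))" for p
  proof -
    have "norm (w p) \<le> norm (w p - v p) + norm (v p)" using norm_triangle_sub[of "w p" "v p"] by simp
    then have "\<Phi> (2 * (1 + norm (w p) + norm (v p))) \<le> \<Phi> (2 + 2 * norm (w p - v p) + 4 * norm (v p))"
      by (intro Phi_mono) auto
    also have "\<dots> \<le> \<Phi> 6 + \<Phi> (6 * norm (w p - v p)) + \<Phi> (12 * norm (v p))"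
      using Phi_add3_le[of 2 "2 * norm (w p - v p)" "4 * norm (v p)"] by simp
    also have "\<Phi> (6 * norm (w p - v p)) \<le> (\<Sum>i\<in>UNIV. \<Phi> (m * \<bar>h i p\<bar>))"
      using Phi_norm_le_sum[of 6 "w p - v p"] unfolding m_def h_def by simp
    finally show ?thesis by simp
  qed
  have "(\<integral>p. \<Phi> (2 * (1 + norm (w p) + norm (v p))) \<partial>X)
      \<le> (\<integral>p. \<Phi> 6 + (\<Sum>i\<in>UNIV. \<Phi> (m * \<bar>h i p\<bar>)) + \<Phi> (12 * norm (v p)) \<partial>X)"
    using integrable_Phi_double_norm_sum[OF X w v] small(1) int_v int_c pointwise
    by (intro integral_mono) auto
  also have "\<dots> = (\<integral>p. \<Phi> 6 \<partial>X) + (\<Sum>i\<in>UNIV. \<integral>p. \<Phi> (m * \<bar>h i p\<bar>) \<partial>X)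
      + (\<integral>p. \<Phi> (12 * norm (v p)) \<partial>X)"
    using small(1) int_v int_c by (simp add: Bochner_Integration.integral_sum)
  also have "(\<Sum>i\<in>UNIV. \<integral>p. \<Phi> (m * \<bar>h i p\<bar>) \<partial>X) \<le> CARD('n)"
    using sum_mono[of UNIV "\<lambda>i. \<integral>p. \<Phi> (m * \<bar>h i p\<bar>) \<partial>X" "\<lambda>_. 1"] small(2) by simp
  finally show ?thesis by simp
qed

lemma lux_norm_phi_eventually_bounded:
  fixes vs :: "nat \<Rightarrow> 'a \<Rightarrow> real ^ 'n"
  assumes X: "finite_measure X" and vs: "\<And>n. vs n \<in> orliczN X \<Phi>" and v: "v \<in> orliczN X \<Phi>"
    and lim: "(\<lambda>n. lux_normN X \<Phi> (\<lambda>p. vs n p - v p)) \<longlonglongrightarrow> 0"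
  shows "\<exists>L. \<forall>\<^sub>F n in sequentially.
    lux_norm X (young_conj \<Phi>) (\<lambda>p. \<phi> (1 + norm (vs n p) + norm (v p))) \<le> L"
proof -
  have "(\<lambda>n. lux_norm X \<Phi> (\<lambda>p. vs n p $ i - v p $ i)) \<longlonglongrightarrow> 0" for i
    using orliczN_diff[OF X vs v] Phi.lux_norm_nonneg
      lux_norm_component_le_lux_normN[OF orliczN_diff[OF X vs v]]
    by (intro real_tendsto_sandwich[OF _ _ tendsto_const lim] always_eventually allI)
      (auto simp: orliczN_def)
  then have "\<forall>\<^sub>F n in sequentially. \<forall>i. lux_norm X \<Phi> (\<lambda>p. vs n p $ i - v p $ i) < 1 / (6 * real CARD('n))"
    by (intro eventually_all_finite order_tendstoD(2)) auto
  then have "\<forall>\<^sub>F n in sequentially. (\<integral>p. \<Phi> (2 * (1 + norm (vs n p) + norm (v p))) \<partial>X)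
      \<le> (\<integral>p. \<Phi> 6 \<partial>X) + CARD('n) + (\<integral>p. \<Phi> (12 * norm (v p)) \<partial>X)"
  proof eventually_elim
    case (elim n)
    then show ?case by (intro integral_Phi_double_norm_sum_le[OF X v vs[of n]]) simp
  qed
  then have "\<forall>\<^sub>F n in sequentially. lux_norm X (young_conj \<Phi>) (\<lambda>p. \<phi> (1 + norm (vs n p) + norm (v p)))
      \<le> max 1 ((\<integral>p. \<Phi> 6 \<partial>X) + CARD('n) + (\<integral>p. \<Phi> (12 * norm (v p)) \<partial>X))"
  proof eventually_elim
    case (elim n)
    have "(\<lambda>p. 1 + norm (vs n p) + norm (v p)) \<in> borel_measurable X"
      using orliczN_measurable[OF vs[of n]] orliczN_measurable[OF v] by measurable
    from phi_comp_orlicz_conj(2)[OF X this _ integrable_Phi_double_norm_sum[OF X vs v]] elim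
    show ?case by (smt (verit) norm_ge_zero)
  qed
  then show ?thesis by blast
qed

lemma tendsto_zero_if_orlicz_lipschitz:
  fixes F :: "('a \<Rightarrow> real ^ 'n) \<Rightarrow> 'a \<Rightarrow> real"
  assumes X: "finite_measure X"
    and lipschitz: "\<exists>c>0. \<forall>v\<in>orliczN X \<Phi>. \<forall>w\<in>orliczN X \<Phi>.
      (\<integral>p. \<bar>F v p - F w p\<bar> \<partial>X) \<le> c * (lux_norm X (young_conj \<Phi>) (\<lambda>_. 1)
        + lux_norm X (young_conj \<Phi>) (\<lambda>p. \<phi> (1 + norm (v p) + norm (w p))))
        * lux_normN X \<Phi> (\<lambda>p. v p - w p)"
    and vs: "\<And>n. vs n \<in> orliczN X \<Phi>" and v: "v \<in> orliczN X \<Phi>"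
    and lim: "(\<lambda>n. lux_normN X \<Phi> (\<lambda>p. vs n p - v p)) \<longlonglongrightarrow> 0"
  shows "(\<lambda>n. \<integral>p. \<bar>F (vs n) p - F v p\<bar> \<partial>X) \<longlonglongrightarrow> 0"
proof -
  define A where "A = lux_norm X (young_conj \<Phi>) (\<lambda>_. 1)"
  obtain c where c: "0 \<le> c" and lip: "\<forall>v\<in>orliczN X \<Phi>. \<forall>w\<in>orliczN X \<Phi>.
      (\<integral>p. \<bar>F v p - F w p\<bar> \<partial>X) \<le> c * (A
        + lux_norm X (young_conj \<Phi>) (\<lambda>p. \<phi> (1 + norm (v p) + norm (w p))))
        * lux_normN X \<Phi> (\<lambda>p. v p - w p)"
    using lipschitz unfolding A_def by (auto dest: less_imp_le)
  obtain L where L: "\<forall>\<^sub>F n in sequentially.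
      lux_norm X (young_conj \<Phi>) (\<lambda>p. \<phi> (1 + norm (vs n p) + norm (v p))) \<le> L"
    using lux_norm_phi_eventually_bounded[OF X vs v lim] by blast
  have "0 \<le> A" unfolding A_def by (rule conj.lux_norm_nonneg[OF conj.const_orlicz[OF X]])
  show ?thesis
  proof (rule real_tendsto_sandwich[OF _ _ tendsto_const tendsto_mult_right_zero[OF lim]])
    show "\<forall>\<^sub>F n in sequentially. 0 \<le> (\<integral>p. \<bar>F (vs n) p - F v p\<bar> \<partial>X)" by simp
    show "\<forall>\<^sub>F n in sequentially.
        (\<integral>p. \<bar>F (vs n) p - F v p\<bar> \<partial>X) \<le> c * (A + L) * lux_normN X \<Phi> (\<lambda>p. vs n p - v p)"
      using L
    proof eventually_elim
      case (elim n)
      have "0 \<le> lux_normN X \<Phi> (\<lambda>p. vs n p - v p)"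
        by (rule lux_normN_nonneg[OF orliczN_diff[OF X vs v]])
      with elim c have "c * (A + lux_norm X (young_conj \<Phi>) (\<lambda>p. \<phi> (1 + norm (vs n p) + norm (v p))))
          * lux_normN X \<Phi> (\<lambda>p. vs n p - v p) \<le> c * (A + L) * lux_normN X \<Phi> (\<lambda>p. vs n p - v p)"
        by (intro mult_right_mono mult_left_mono) auto
      with lip vs[of n] v show ?case by fastforce
    qed
  qed
qed

end

section \<open>Convex integrands with \<open>\<Phi>\<close>-growth\<close>

lemma strictly_convex_imp_convex_on:
  assumes "strictly_convex g"
  shows "convex_on UNIV g"
proof (rule convex_onI)
  fix t :: real and x y
  assume "0 < t" "t < 1"
  then show "g ((1 - t) *\<^sub>R x + t *\<^sub>R y) \<le> (1 - t) * g x + t * g y"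
    using assms unfolding strictly_convex_def
    by (cases "x = y") (auto simp: algebra_simps less_imp_le simp flip: scaleR_add_left)
qed simp

text \<open>The right-hand side is the value at the point a distance \<open>t\<close> beyond \<open>b\<close> on the line
  through \<open>a\<close> and \<open>b\<close>; \<open>b\<close> is a convex combination of \<open>a\<close> and that point.\<close>

lemma convex_on_diff_le:
  fixes g :: "'a::real_normed_vector \<Rightarrow> real"
  assumes convex: "convex_on UNIV g" and nonneg: "\<And>x. 0 \<le> g x" and t: "0 < t"
  shows "t * (g b - g a) \<le> norm (b - a) * g (b + (t / norm (b - a)) *\<^sub>R (b - a))"
proof (cases "a = b")
  case False
  define r where "r = norm (b - a)"
  define z where "z = b + (t / r) *\<^sub>R (b - a)"
  define \<theta> where "\<theta> = r / (r + t)"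
  have r: "0 < r" using False unfolding r_def by simp
  have \<theta>: "0 < \<theta>" "\<theta> < 1" "(r + t) * (1 - \<theta>) = t" "(r + t) * \<theta> = r"
    using r t unfolding \<theta>_def by (auto simp: field_simps)
  have "(1 - \<theta>) *\<^sub>R a + \<theta> *\<^sub>R z
      = (t / (r + t)) *\<^sub>R a + (r / (r + t)) *\<^sub>R (b + (t / r) *\<^sub>R (b - a))"
    using \<theta>(3) r t unfolding \<theta>_def z_def by (simp add: field_simps)
  also have "\<dots> = (1 / (r + t)) *\<^sub>R (t *\<^sub>R a + r *\<^sub>R b + t *\<^sub>R (b - a))"
    using r t by (simp add: algebra_simps)
  also have "\<dots> = (1 / (r + t)) *\<^sub>R ((r + t) *\<^sub>R b)" by (simp add: algebra_simps)
  finally have "(1 - \<theta>) *\<^sub>R a + \<theta> *\<^sub>R z = b" using r t by simp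
  then have "g b \<le> (1 - \<theta>) * g a + \<theta> * g z"
    using convex_onD[OF convex, of \<theta> a z] \<theta> by simp
  then have "(r + t) * g b \<le> (r + t) * ((1 - \<theta>) * g a + \<theta> * g z)"
    using r t by (intro mult_left_mono) auto
  also have "\<dots> = ((r + t) * (1 - \<theta>)) * g a + ((r + t) * \<theta>) * g z"
    by (simp add: algebra_simps)
  finally have "(r + t) * g b \<le> t * g a + r * g z" unfolding \<theta>(3,4) .
  moreover have "0 \<le> r * g b" using nonneg[of b] r by simp
  ultimately show ?thesis unfolding r_def[symmetric] z_def[symmetric] by (simp add: algebra_simps)
qed simp

context young
begin

lemma convex_growth_diff_le:
  fixes g :: "'a::real_normed_vector \<Rightarrow> real"
  assumes convex: "convex_on UNIV g" and nonneg: "\<And>x. 0 \<le> g x"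
    and growth: "\<And>x. g x \<le> c * (1 + \<Phi> (norm x))" and c: "0 \<le> c"
  shows "g b - g a \<le> c * (1 + 2 * \<phi> (2 * (1 + norm a + norm b))) * norm (b - a)"
proof -
  define t where "t = 1 + norm a + norm b"
  define z where "z = b + (t / norm (b - a)) *\<^sub>R (b - a)"
  have t: "1 \<le> t" unfolding t_def by simp
  have "norm z \<le> norm b + t"
    using norm_triangle_ineq[of b "(t / norm (b - a)) *\<^sub>R (b - a)"] t
    unfolding z_def by (cases "a = b") auto
  moreover have "norm b \<le> t" unfolding t_def by simp
  ultimately have "norm z \<le> 2 * t" by linarith
  then have "\<Phi> (norm z) \<le> 2 * t * \<phi> (2 * t)"
    using Phi_mono[OF norm_ge_zero] Phi_le_mult_phi[of "2 * t"] t by fastforce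
  then have "g z \<le> c * (1 + 2 * t * \<phi> (2 * t))"
    using growth[of z] mult_left_mono[OF _ c, of "1 + \<Phi> (norm z)" "1 + 2 * t * \<phi> (2 * t)"]
    by linarith
  also have "\<dots> \<le> t * (c * (1 + 2 * \<phi> (2 * t)))"
    using t c by (simp add: algebra_simps mult_le_cancel_left1)
  finally have gz: "g z \<le> t * (c * (1 + 2 * \<phi> (2 * t)))" .
  have "t * (g b - g a) \<le> norm (b - a) * g z"
    using convex_on_diff_le[OF convex nonneg, of t b a] t unfolding z_def by simp
  also have "\<dots> \<le> norm (b - a) * (t * (c * (1 + 2 * \<phi> (2 * t))))"
    using gz by (intro mult_left_mono) auto
  finally have "t * (g b - g a) \<le> t * (c * (1 + 2 * \<phi> (2 * t)) * norm (b - a))"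
    by (simp add: mult_ac)
  then show ?thesis using t unfolding t_def by simp
qed

end

context young_Delta2
begin

lemma convex_growth_lipschitz:
  obtains K where "0 < K"
    "\<And>(g :: 'a::real_normed_vector \<Rightarrow> real) c a b. convex_on UNIV g \<Longrightarrow> (\<And>x. 0 \<le> g x) \<Longrightarrow>
      (\<And>x. g x \<le> c * (1 + \<Phi> (norm x))) \<Longrightarrow> 0 \<le> c \<Longrightarrow>
      \<bar>g a - g b\<bar> \<le> c * K * (1 + \<phi> (1 + norm a + norm b)) * norm (a - b)"
proof -
  obtain A C where AC: "0 \<le> A" "0 \<le> C" "\<And>t. 1 \<le> t \<Longrightarrow> \<phi> (2 * t) \<le> A * \<phi> t + C"
    using phi_double_le_affine by auto
  define K where "K = 1 + 2 * C + 2 * A"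
  have "1 + 2 * \<phi> (2 * t) \<le> K * (1 + \<phi> t)" if "1 \<le> t" for t
  proof -
    have "0 \<le> \<phi> t" using phi_nonneg that by simp
    then have "A * \<phi> t \<le> A * (1 + \<phi> t)" "C \<le> C * (1 + \<phi> t)"
      using AC(1,2) by (simp_all add: mult_left_mono mult_le_cancel_left1)
    moreover have "K * (1 + \<phi> t) = (1 + \<phi> t) + 2 * (A * (1 + \<phi> t)) + 2 * (C * (1 + \<phi> t))"
      unfolding K_def by (simp add: algebra_simps)
    ultimately show ?thesis using AC(3)[OF that] \<open>0 \<le> \<phi> t\<close> by linarith
  qed
  moreover have "0 < K" using AC unfolding K_def by simp
  moreover have "\<bar>g a - g b\<bar> \<le> c * K * (1 + \<phi> (1 + norm a + norm b)) * norm (a - b)"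
    if "convex_on UNIV g" "\<And>x. 0 \<le> g x" "\<And>x. g x \<le> c * (1 + \<Phi> (norm x))" "0 \<le> c"
      and K: "\<And>t. 1 \<le> t \<Longrightarrow> 1 + 2 * \<phi> (2 * t) \<le> K * (1 + \<phi> t)"
    for g :: "'a \<Rightarrow> real" and c a b
  proof -
    let ?t = "1 + norm a + norm b"
    have "\<bar>g a - g b\<bar> \<le> c * (1 + 2 * \<phi> (2 * ?t)) * norm (a - b)"
      using convex_growth_diff_le[OF that(1-4), of a b] convex_growth_diff_le[OF that(1-4), of b a]
      by (simp add: norm_minus_commute add_ac)
    also have "\<dots> \<le> c * (K * (1 + \<phi> ?t)) * norm (a - b)"
      using K[of ?t] that(4) by (intro mult_right_mono mult_left_mono) auto
    finally show ?thesis by (simp add: mult.assoc)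
  qed
  ultimately show thesis using that by blast
qed

end

section \<open>Carath\'eodory integrands\<close>

lemma continuous_le_on_dense:
  fixes g h :: "'a::topological_space \<Rightarrow> real"
  assumes "continuous_on UNIV g" "continuous_on UNIV h"
    and dense: "\<And>U. open U \<Longrightarrow> U \<noteq> {} \<Longrightarrow> \<exists>d\<in>D. d \<in> U" and le: "\<And>d. d \<in> D \<Longrightarrow> g d \<le> h d"
  shows "g x \<le> h x"
  using dense[of "- {x. g x \<le> h x}"] closed_Collect_le[OF assms(1,2)] le by auto

lemma borel_measurable_caratheodory:
  fixes h :: "'w \<Rightarrow> 'b::euclidean_space \<Rightarrow> real"
  assumes G: "G \<in> sets M" and meas: "\<And>l. (\<lambda>\<omega>. h \<omega> l) \<in> borel_measurable M"
    and cont: "\<And>\<omega>. \<omega> \<in> G \<Longrightarrow> continuous_on UNIV (h \<omega>)"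
    and s: "s \<in> X \<rightarrow>\<^sub>M M" and v: "v \<in> borel_measurable X"
  shows "(\<lambda>p. if s p \<in> G then h (s p) (v p) else 0) \<in> borel_measurable X"
proof -
  obtain D :: "'b set" where D: "countable D" "\<And>U. open U \<Longrightarrow> U \<noteq> {} \<Longrightarrow> \<exists>d\<in>D. d \<in> U"
    using countable_dense_setE by blast
  define d where "d = from_nat_into D"
  have "D \<noteq> {}" using D(2)[of UNIV] by auto
  have dense: "\<exists>j. dist x (d j) < e" if "0 < e" for x e
  proof -
    have "\<exists>y\<in>D. y \<in> ball x e" using D(2)[of "ball x e"] that by simp
    then obtain y where y: "y \<in> D" "y \<in> ball x e" by blast
    moreover have "range d = D" using range_from_nat_into[OF \<open>D \<noteq> {}\<close> D(1)] by (simp add: d_def)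
    ultimately show ?thesis by auto
  qed
  text \<open>\<open>v p\<close> is approximated by the first point of a dense sequence within \<open>1 / (k + 1)\<close>;
    the approximants are measurable because they range over countably many points.\<close>
  define J where "J k p = (LEAST j. dist (v p) (d j) < inverse (Suc k))" for k p
  have J: "dist (v p) (d (J k p)) < inverse (Suc k)" for k p
    unfolding J_def by (rule LeastI_ex) (simp add: dense)
  have J_meas: "J k \<in> X \<rightarrow>\<^sub>M count_space UNIV" for k
    unfolding J_def using v by measurable
  define g where "g j p = (if s p \<in> G then h (s p) (d j) else 0)" for j p
  have "{p \<in> space X. s p \<in> G} \<in> sets X" using s G by measurable
  then have g_meas: "g j \<in> borel_measurable X" for j
    unfolding g_def by (rule measurable_If[rotated 2]) (use measurable_compose[OF s meas] in auto)
  show ?thesis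
  proof (rule borel_measurable_LIMSEQ_real)
    show "(\<lambda>p. g (J k p) p) \<in> borel_measurable X" for k
      by (rule measurable_compose_countable'[OF g_meas J_meas]) simp
    fix p
    have "(\<lambda>k. d (J k p)) \<longlonglongrightarrow> v p"
    proof (subst tendsto_dist_iff, rule real_tendsto_sandwich)
      show "\<forall>\<^sub>F k in sequentially. 0 \<le> dist (d (J k p)) (v p)" by simp
      show "\<forall>\<^sub>F k in sequentially. dist (d (J k p)) (v p) \<le> inverse (real (Suc k))"
        using J by (simp add: dist_commute less_imp_le)
      show "(\<lambda>k. inverse (real (Suc k))) \<longlonglongrightarrow> 0" by (rule LIMSEQ_inverse_real_of_nat)
    qed simp
    then show "(\<lambda>k. g (J k p) p) \<longlonglongrightarrow> (if s p \<in> G then h (s p) (v p) else 0)"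
      using cont[of "s p"] unfolding g_def
      by (auto intro: isCont_tendsto_compose simp: continuous_on_eq_continuous_at)
  qed
qed

lemma (in young) convex_integrand_null_set:
  fixes f :: "'w \<Rightarrow> 'b::euclidean_space \<Rightarrow> real"
  assumes convex: "AE \<omega> in M. strictly_convex (f \<omega>)" and c1: "0 \<le> c1"
    and growth: "\<And>l. AE \<omega> in M. c1 * \<Phi> (norm l) \<le> f \<omega> l \<and> f \<omega> l \<le> c2 * (1 + \<Phi> (norm l))"
  obtains N where "N \<in> null_sets M"
    "\<And>\<omega>. \<omega> \<in> space M - N \<Longrightarrow> convex_on UNIV (f \<omega>) \<and> continuous_on UNIV (f \<omega>) \<and>
      (\<forall>l. 0 \<le> f \<omega> l \<and> f \<omega> l \<le> c2 * (1 + \<Phi> (norm l)))"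
proof -
  obtain D :: "'b set" where D: "countable D" "\<And>U. open U \<Longrightarrow> U \<noteq> {} \<Longrightarrow> \<exists>d\<in>D. d \<in> U"
    using countable_dense_setE by blast
  have "AE \<omega> in M. \<forall>l\<in>D. 0 \<le> f \<omega> l \<and> f \<omega> l \<le> c2 * (1 + \<Phi> (norm l))"
    unfolding AE_ball_countable[OF D(1)]
  proof
    fix l
    show "AE \<omega> in M. 0 \<le> f \<omega> l \<and> f \<omega> l \<le> c2 * (1 + \<Phi> (norm l))"
      using growth[of l]
    proof eventually_elim
      case (elim \<omega>)
      then show ?case using mult_nonneg_nonneg[OF c1 Phi_nonneg[OF norm_ge_zero]] order_trans by blast
    qed
  qed
  with convex have "AE \<omega> in M. strictly_convex (f \<omega>) \<and>
      (\<forall>l\<in>D. 0 \<le> f \<omega> l \<and> f \<omega> l \<le> c2 * (1 + \<Phi> (norm l)))"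
    by (rule AE_conjI)
  then obtain N where N: "N \<in> null_sets M" "\<And>\<omega>. \<omega> \<in> space M - N \<Longrightarrow> strictly_convex (f \<omega>) \<and>
      (\<forall>l\<in>D. 0 \<le> f \<omega> l \<and> f \<omega> l \<le> c2 * (1 + \<Phi> (norm l)))"
    by (auto simp: eventually_ae_filter)
  have bound: "continuous_on UNIV (\<lambda>l::'b. c2 * (1 + \<Phi> (norm l)))"
    by (intro continuous_intros continuous_on_compose2[OF continuous_on_Phi]) auto
  show thesis
  proof (rule that[OF N(1)])
    fix \<omega>
    assume \<omega>: "\<omega> \<in> space M - N"
    then have convex: "convex_on UNIV (f \<omega>)" using N(2) strictly_convex_imp_convex_on by blast
    then have cont: "continuous_on UNIV (f \<omega>)" by (rule convex_on_continuous[OF open_UNIV])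
    have "0 \<le> f \<omega> l" "f \<omega> l \<le> c2 * (1 + \<Phi> (norm l))" for l
      using continuous_le_on_dense[OF continuous_on_const cont D(2)]
        continuous_le_on_dense[OF cont bound D(2)] N(2)[OF \<omega>] by auto
    with convex cont show "convex_on UNIV (f \<omega>) \<and> continuous_on UNIV (f \<omega>) \<and>
        (\<forall>l. 0 \<le> f \<omega> l \<and> f \<omega> l \<le> c2 * (1 + \<Phi> (norm l)))" by blast
  qed
qed

section \<open>Invariance under the dynamical system\<close>

lemma finite_measure_restrict_lborel_pair:
  fixes Q :: "'a::euclidean_space set"
  assumes "bounded Q" "Q \<in> sets lborel" "finite_measure M"
  shows "finite_measure (restrict_space lborel Q \<Otimes>\<^sub>M M)"
proof (rule finite_measure_pair_measure[OF assms(3) finite_measureI])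
  show "emeasure (restrict_space lborel Q) (space (restrict_space lborel Q)) \<noteq> \<infinity>"
    using emeasure_bounded_finite[OF assms(1)] assms(2)
    by (simp add: emeasure_restrict_space space_restrict_space)
qed

definition skew_shift :: "(real ^ 'n \<Rightarrow> 'w \<Rightarrow> 'w) \<Rightarrow> real \<Rightarrow> (real ^ 'n) \<times> 'w \<Rightarrow> (real ^ 'n) \<times> 'w"
  where "skew_shift T c p = (fst p, T (c *\<^sub>R fst p) (snd p))"

context
  fixes M :: "'w measure" and T :: "real ^ 'n \<Rightarrow> 'w \<Rightarrow> 'w" and Q :: "(real ^ 'n) set"
  assumes T: "dynamical_system M T"
begin

lemma measurable_skew_shift:
  "skew_shift T c \<in> restrict_space lborel Q \<Otimes>\<^sub>M M \<rightarrow>\<^sub>M restrict_space lborel Q \<Otimes>\<^sub>M M"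
proof -
  have "(\<lambda>x::real ^ 'n. c *\<^sub>R x) \<in> borel_measurable borel"
    by (intro borel_measurable_continuous_onI continuous_intros)
  then have "(\<lambda>x::real ^ 'n. c *\<^sub>R x) \<in> restrict_space lborel Q \<rightarrow>\<^sub>M lborel"
    by (intro measurable_restrict_space1) simp
  then have "(\<lambda>p. (c *\<^sub>R fst p, snd p)) \<in> restrict_space lborel Q \<Otimes>\<^sub>M M \<rightarrow>\<^sub>M lborel \<Otimes>\<^sub>M M"
    by (intro measurable_Pair measurable_compose[OF measurable_fst] measurable_snd)
  from measurable_compose[OF this, of "\<lambda>p. T (fst p) (snd p)"]
  have "(\<lambda>p. T (c *\<^sub>R fst p) (snd p)) \<in> restrict_space lborel Q \<Otimes>\<^sub>M M \<rightarrow>\<^sub>M M"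
    using T unfolding dynamical_system_def by simp
  then show ?thesis unfolding skew_shift_def by (intro measurable_Pair measurable_fst)
qed

lemma skew_shift_inverse:
  assumes "p \<in> space (restrict_space lborel Q \<Otimes>\<^sub>M M)"
  shows "skew_shift T (- c) (skew_shift T c p) = p"
proof -
  have "snd p \<in> space M" using assms by (auto simp: space_pair_measure)
  then have "T (- c *\<^sub>R fst p) (T (c *\<^sub>R fst p) (snd p)) = T 0 (snd p)"
    using T unfolding dynamical_system_def by (metis add.left_inverse scaleR_minus_left)
  also have "\<dots> = snd p" using \<open>snd p \<in> space M\<close> T unfolding dynamical_system_def by simp
  finally show ?thesis by (simp add: skew_shift_def)
qed

lemma distr_skew_shift:
  assumes M: "sigma_finite_measure M"
  shows "distr (restrict_space lborel Q \<Otimes>\<^sub>M M) (restrict_space lborel Q \<Otimes>\<^sub>M M) (skew_shift T c)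
    = restrict_space lborel Q \<Otimes>\<^sub>M M" (is "distr ?X ?X ?S = ?X")
proof (rule measure_eqI)
  fix A
  assume "A \<in> sets (distr ?X ?X ?S)"
  then have A: "A \<in> sets ?X" by simp
  have "emeasure (distr ?X ?X ?S) A = emeasure ?X (?S -` A \<inter> space ?X)"
    by (rule emeasure_distr[OF measurable_skew_shift A])
  also have "\<dots> = (\<integral>\<^sup>+x. emeasure M (Pair x -` (?S -` A \<inter> space ?X)) \<partial>restrict_space lborel Q)"
    by (rule sigma_finite_measure.emeasure_pair_measure_alt[OF M])
      (rule measurable_sets[OF measurable_skew_shift A])
  also have "\<dots> = (\<integral>\<^sup>+x. emeasure M (Pair x -` A) \<partial>restrict_space lborel Q)"
  proof (rule nn_integral_cong)
    fix x
    assume x: "x \<in> space (restrict_space lborel Q)"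
    have "Pair x -` (?S -` A \<inter> space ?X) = T (c *\<^sub>R x) -` (Pair x -` A) \<inter> space M"
      using x by (auto simp: skew_shift_def space_pair_measure)
    moreover have "emeasure M (T (c *\<^sub>R x) -` (Pair x -` A) \<inter> space M) = emeasure M (Pair x -` A)"
      using T emeasure_distr[of "T (c *\<^sub>R x)" M M "Pair x -` A"] sets_Pair1[OF A]
      unfolding dynamical_system_def by simp
    ultimately show "emeasure M (Pair x -` (?S -` A \<inter> space ?X)) = emeasure M (Pair x -` A)"
      by simp
  qed
  also have "\<dots> = emeasure ?X A"
    by (rule sigma_finite_measure.emeasure_pair_measure_alt[OF M A, symmetric])
  finally show "emeasure (distr ?X ?X ?S) A = emeasure ?X A" .
qed simp

lemma integral_skew_shift:
  fixes g :: "(real ^ 'n) \<times> 'w \<Rightarrow> real"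
  assumes M: "sigma_finite_measure M"
  shows "(\<integral>p. g (skew_shift T c p) \<partial>(restrict_space lborel Q \<Otimes>\<^sub>M M))
    = (\<integral>p. g p \<partial>(restrict_space lborel Q \<Otimes>\<^sub>M M))" (is "?lhs = ?rhs")
proof (cases "g \<in> borel_measurable (restrict_space lborel Q \<Otimes>\<^sub>M M)")
  case True
  then show ?thesis
    using integral_distr[OF measurable_skew_shift True] distr_skew_shift[OF M] by simp
next
  case False
  text \<open>Then neither side is integrable, since \<open>skew_shift T (- c)\<close> inverts \<open>skew_shift T c\<close>.\<close>
  have "g \<circ> skew_shift T c \<notin> borel_measurable (restrict_space lborel Q \<Otimes>\<^sub>M M)"
  proof
    assume "g \<circ> skew_shift T c \<in> borel_measurable (restrict_space lborel Q \<Otimes>\<^sub>M M)"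
    then have "g \<circ> skew_shift T c \<circ> skew_shift T (- c) \<in> borel_measurable (restrict_space lborel Q \<Otimes>\<^sub>M M)"
      by (rule measurable_comp[OF measurable_skew_shift])
    then have "g \<in> borel_measurable (restrict_space lborel Q \<Otimes>\<^sub>M M)"
      by (rule measurable_cong[THEN iffD1, rotated])
        (metis comp_apply minus_minus skew_shift_inverse)
    with False show False by simp
  qed
  with False have "\<not> integrable (restrict_space lborel Q \<Otimes>\<^sub>M M) (g \<circ> skew_shift T c)"
    "\<not> integrable (restrict_space lborel Q \<Otimes>\<^sub>M M) g"
    by (auto dest: borel_measurable_integrable)
  then show ?thesis by (simp add: not_integrable_integral_eq comp_def)
qed

end

section \<open>The Nemytskii operator of the integrand\<close>

text \<open>The integrand is only known to be well behaved for \<open>\<omega>\<close> in a set \<open>G\<close> of full measure;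
  outside \<open>G\<close> the operator is set to zero.\<close>

definition nemytskii :: "'w set \<Rightarrow> ('w \<Rightarrow> 'b \<Rightarrow> real) \<Rightarrow> ('a \<times> 'w \<Rightarrow> 'b) \<Rightarrow> 'a \<times> 'w \<Rightarrow> real"
  where "nemytskii G f v p = (if snd p \<in> G then f (snd p) (v p) else 0)"

lemma nemytskii_measurable:
  fixes f :: "'w \<Rightarrow> 'b::euclidean_space \<Rightarrow> real"
  assumes "G \<in> sets M" "\<And>l. (\<lambda>\<omega>. f \<omega> l) \<in> borel_measurable M"
    "\<And>\<omega>. \<omega> \<in> G \<Longrightarrow> continuous_on UNIV (f \<omega>)" "v \<in> borel_measurable (A \<Otimes>\<^sub>M M)"
  shows "nemytskii G f v \<in> borel_measurable (A \<Otimes>\<^sub>M M)"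
  unfolding nemytskii_def by (rule borel_measurable_caratheodory[OF assms(1-3) measurable_snd assms(4)])

lemma AE_nemytskii_eq:
  assumes M: "sigma_finite_measure M" and N: "N \<in> null_sets M"
  shows "AE p in A \<Otimes>\<^sub>M M. nemytskii (space M - N) f v p = f (snd p) (v p)"
proof (rule AE_I)
  show "{p \<in> space (A \<Otimes>\<^sub>M M). nemytskii (space M - N) f v p \<noteq> f (snd p) (v p)} \<subseteq> space A \<times> N"
    by (auto simp: nemytskii_def space_pair_measure)
  show sets: "space A \<times> N \<in> sets (A \<Otimes>\<^sub>M M)" using N by auto
  have "emeasure (A \<Otimes>\<^sub>M M) (space A \<times> N) = (\<integral>\<^sup>+x. emeasure M (Pair x -` (space A \<times> N)) \<partial>A)"
    by (rule sigma_finite_measure.emeasure_pair_measure_alt[OF M sets])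
  also have "\<dots> = 0" using N by (simp add: nn_integral_0_iff_AE null_setsD1)
  finally show "emeasure (A \<Otimes>\<^sub>M M) (space A \<times> N) = 0" .
qed

context young_Delta2
begin

lemma nemytskii_integrable:
  fixes f :: "'w \<Rightarrow> real ^ 'n \<Rightarrow> real"
  assumes X: "finite_measure (A \<Otimes>\<^sub>M M)" and G: "G \<in> sets M"
    and meas: "\<And>l. (\<lambda>\<omega>. f \<omega> l) \<in> borel_measurable M"
    and cont: "\<And>\<omega>. \<omega> \<in> G \<Longrightarrow> continuous_on UNIV (f \<omega>)"
    and bounds: "\<And>\<omega> l. \<omega> \<in> G \<Longrightarrow> 0 \<le> f \<omega> l \<and> f \<omega> l \<le> c * (1 + \<Phi> (norm l))"
    and c: "0 \<le> c" and v: "v \<in> orliczN (A \<Otimes>\<^sub>M M) \<Phi>"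
  shows "integrable (A \<Otimes>\<^sub>M M) (nemytskii G f v)"
proof (rule integrable_nonneg_dominated)
  show "integrable (A \<Otimes>\<^sub>M M) (\<lambda>p. c * (1 + \<Phi> (1 * norm (v p))))"
    by (intro integrable_mult_right Bochner_Integration.integrable_add
        finite_measure.integrable_const[OF X] orliczN_Phi_integrable[OF X v]) simp
  show "nemytskii G f v \<in> borel_measurable (A \<Otimes>\<^sub>M M)"
    by (rule nemytskii_measurable[OF G meas cont orliczN_measurable[OF v]])
  show "0 \<le> nemytskii G f v p" for p using bounds by (simp add: nemytskii_def)
  show "nemytskii G f v p \<le> c * (1 + \<Phi> (1 * norm (v p)))" for p
    using bounds Phi_nonneg[of "norm (v p)"] c by (simp add: nemytskii_def)
qed

lemma nemytskii_lipschitz: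
  fixes f :: "'w \<Rightarrow> real ^ 'n \<Rightarrow> real"
  assumes X: "finite_measure (A \<Otimes>\<^sub>M M)" and G: "G \<in> sets M"
    and meas: "\<And>l. (\<lambda>\<omega>. f \<omega> l) \<in> borel_measurable M"
    and good: "\<And>\<omega>. \<omega> \<in> G \<Longrightarrow> convex_on UNIV (f \<omega>) \<and> continuous_on UNIV (f \<omega>) \<and>
      (\<forall>l. 0 \<le> f \<omega> l \<and> f \<omega> l \<le> c2 * (1 + \<Phi> (norm l)))"
    and c2: "0 < c2"
  shows "\<exists>c>0. \<forall>v\<in>orliczN (A \<Otimes>\<^sub>M M) \<Phi>. \<forall>w\<in>orliczN (A \<Otimes>\<^sub>M M) \<Phi>.
    (\<integral>p. \<bar>nemytskii G f v p - nemytskii G f w p\<bar> \<partial>(A \<Otimes>\<^sub>M M))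
      \<le> c * (lux_norm (A \<Otimes>\<^sub>M M) (young_conj \<Phi>) (\<lambda>_. 1)
          + lux_norm (A \<Otimes>\<^sub>M M) (young_conj \<Phi>) (\<lambda>p. \<phi> (1 + norm (v p) + norm (w p))))
        * lux_normN (A \<Otimes>\<^sub>M M) \<Phi> (\<lambda>p. v p - w p)"
proof -
  obtain K where K: "0 < K" "\<And>(g :: real ^ 'n \<Rightarrow> real) c a b. convex_on UNIV g \<Longrightarrow> (\<And>x. 0 \<le> g x) \<Longrightarrow>
      (\<And>x. g x \<le> c * (1 + \<Phi> (norm x))) \<Longrightarrow> 0 \<le> c \<Longrightarrow>
      \<bar>g a - g b\<bar> \<le> c * K * (1 + \<phi> (1 + norm a + norm b)) * norm (a - b)"
    using convex_growth_lipschitz by blast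
  have pointwise: "\<bar>nemytskii G f v p - nemytskii G f w p\<bar>
      \<le> c2 * K * ((1 + \<phi> (1 + norm (v p) + norm (w p))) * norm (v p - w p))"
    for v w :: "'a \<times> 'w \<Rightarrow> real ^ 'n" and p
    using K(2)[where g = "f (snd p)" and c = c2 and a = "v p" and b = "w p"] good[of "snd p"] c2 K(1) phi_nonneg[of "1 + norm (v p) + norm (w p)"]
    by (auto simp: nemytskii_def mult.assoc)
  have "(\<integral>p. \<bar>nemytskii G f v p - nemytskii G f w p\<bar> \<partial>(A \<Otimes>\<^sub>M M))
      \<le> 2 * (c2 * K) * (lux_norm (A \<Otimes>\<^sub>M M) (young_conj \<Phi>) (\<lambda>_. 1)
          + lux_norm (A \<Otimes>\<^sub>M M) (young_conj \<Phi>) (\<lambda>p. \<phi> (1 + norm (v p) + norm (w p))))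
        * lux_normN (A \<Otimes>\<^sub>M M) \<Phi> (\<lambda>p. v p - w p)"
    if v: "v \<in> orliczN (A \<Otimes>\<^sub>M M) \<Phi>" and w: "w \<in> orliczN (A \<Otimes>\<^sub>M M) \<Phi>" for v w
  proof -
    note weighted = weighted_norm_diff_integral_le[OF X v w]
    have "(\<integral>p. \<bar>nemytskii G f v p - nemytskii G f w p\<bar> \<partial>(A \<Otimes>\<^sub>M M))
        \<le> (\<integral>p. c2 * K * ((1 + \<phi> (1 + norm (v p) + norm (w p))) * norm (v p - w p)) \<partial>(A \<Otimes>\<^sub>M M))"
      using nemytskii_integrable[OF X G meas _ _ _ v, where c = c2]
        nemytskii_integrable[OF X G meas _ _ _ w, where c = c2]
        good c2 weighted(1) pointwise by (intro integral_mono) auto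
    also have "\<dots> \<le> c2 * K * (2 * (lux_norm (A \<Otimes>\<^sub>M M) (young_conj \<Phi>) (\<lambda>_. 1)
          + lux_norm (A \<Otimes>\<^sub>M M) (young_conj \<Phi>) (\<lambda>p. \<phi> (1 + norm (v p) + norm (w p))))
        * lux_normN (A \<Otimes>\<^sub>M M) \<Phi> (\<lambda>p. v p - w p))"
      using weighted(2) c2 K(1) by (simp add: mult_left_mono)
    finally show ?thesis by (simp add: mult_ac)
  qed
  with c2 K(1) show ?thesis by (intro exI[of _ "2 * (c2 * K)"]) auto
qed

end

theorem proposition23:
  fixes \<phi> \<Phi> :: "real \<Rightarrow> real"
    and Q :: "(real ^ 'n) set"
    and M :: "'w measure"
    and T :: "real ^ 'n \<Rightarrow> 'w \<Rightarrow> 'w"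
    and f :: "'w \<Rightarrow> real ^ 'n \<Rightarrow> real"
    and c1 c2 :: real
  defines "QO \<equiv> restrict_space lborel Q \<Otimes>\<^sub>M M"
  assumes young: "young_function \<phi> \<Phi>"
    and D2: "Delta2 \<Phi>" "Delta2 (young_conj \<Phi>)"
    and Dp: "Delta' \<Phi>" "Delta' (young_conj \<Phi>)"
    and Q: "open Q" "bounded Q"
    and M: "prob_space M"
    and T: "dynamical_system M T"
    and H1: "\<And>l. (\<lambda>\<omega>. f \<omega> l) \<in> borel_measurable M"
    and H2: "AE \<omega> in M. strictly_convex (f \<omega>)"
    and H3: "0 < c1" "0 < c2"
      "\<And>l. AE \<omega> in M. c1 * \<Phi> (norm l) \<le> f \<omega> l \<and> f \<omega> l \<le> c2 * (1 + \<Phi> (norm l))"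
  shows
    "(\<forall>v\<in>tensor_spaceN M T Q.
        ((\<lambda>\<epsilon>. \<integral>p. f (T ((1 / \<epsilon>) *\<^sub>R fst p) (snd p))
                      (v (fst p, T ((1 / \<epsilon>) *\<^sub>R fst p) (snd p))) \<partial>QO)
          \<longlongrightarrow> (\<integral>p. f (snd p) (v p) \<partial>QO)) (at_right 0))
     \<and>
     (\<exists>F :: ((real ^ 'n) \<times> 'w \<Rightarrow> real ^ 'n) \<Rightarrow> ((real ^ 'n) \<times> 'w \<Rightarrow> real).
        (\<forall>v\<in>tensor_spaceN M T Q. AE p in QO. F v p = f (snd p) (v p)) \<and>
        (\<forall>v\<in>orliczN QO \<Phi>. integrable QO (F v)) \<and>
        (\<forall>vs v. (\<forall>n. vs n \<in> orliczN QO \<Phi>) \<longrightarrow> v \<in> orliczN QO \<Phi> \<longrightarrow>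
            (\<lambda>n. lux_normN QO \<Phi> (\<lambda>p. vs n p - v p)) \<longlonglongrightarrow> 0 \<longrightarrow>
            (\<lambda>n. \<integral>p. \<bar>F (vs n) p - F v p\<bar> \<partial>QO) \<longlonglongrightarrow> 0) \<and>
        (\<exists>c>0. \<forall>v\<in>orliczN QO \<Phi>. \<forall>w\<in>orliczN QO \<Phi>.
            (\<integral>p. \<bar>F v p - F w p\<bar> \<partial>QO)
              \<le> c * (lux_norm QO (young_conj \<Phi>) (\<lambda>_. 1)
                     + lux_norm QO (young_conj \<Phi>) (\<lambda>p. \<phi> (1 + norm (v p) + norm (w p))))
                  * lux_normN QO \<Phi> (\<lambda>p. v p - w p)))"
proof -
  interpret young_Delta2 \<phi> \<Phi> using young D2(1) by unfold_locales
  have M_sf: "sigma_finite_measure M" using M by (rule prob_space_imp_sigma_finite)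
  have QO_finite: "finite_measure QO"
    unfolding QO_def using Q M by (intro finite_measure_restrict_lborel_pair prob_space.finite_measure) auto
  obtain N where N: "N \<in> null_sets M" "\<And>\<omega>. \<omega> \<in> space M - N \<Longrightarrow> convex_on UNIV (f \<omega>) \<and>
      continuous_on UNIV (f \<omega>) \<and> (\<forall>l. 0 \<le> f \<omega> l \<and> f \<omega> l \<le> c2 * (1 + \<Phi> (norm l)))"
    using convex_integrand_null_set[OF H2 _ H3(3)] H3(1) by (metis less_imp_le)
  have G: "space M - N \<in> sets M" using N(1) by auto
  note lipschitz = nemytskii_lipschitz[OF QO_finite[unfolded QO_def] G H1 N(2) H3(2), folded QO_def]
  have homogenized: "((\<lambda>\<epsilon>. \<integral>p. f (T ((1 / \<epsilon>) *\<^sub>R fst p) (snd p))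
      (v (fst p, T ((1 / \<epsilon>) *\<^sub>R fst p) (snd p))) \<partial>QO) \<longlongrightarrow> (\<integral>p. f (snd p) (v p) \<partial>QO)) (at_right 0)"
    for v
    using integral_skew_shift[OF T M_sf, where g = "\<lambda>q. f (snd q) (v q)"]
    unfolding QO_def skew_shift_def by simp
  show ?thesis
  proof (intro conjI ballI exI[of _ "nemytskii (space M - N) f"] allI impI)
    show "AE p in QO. nemytskii (space M - N) f v p = f (snd p) (v p)" for v
      unfolding QO_def by (rule AE_nemytskii_eq[OF M_sf N(1)])
    show "integrable QO (nemytskii (space M - N) f v)" if "v \<in> orliczN QO \<Phi>" for v
      using N(2) H3(2) unfolding QO_def
      by (intro nemytskii_integrable[OF QO_finite[unfolded QO_def] G H1 _ _ _ that[unfolded QO_def],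
          where c = c2]) auto
  qed (use homogenized lipschitz in
      \<open>auto intro: tendsto_zero_if_orlicz_lipschitz[OF QO_finite lipschitz]\<close>)
qed

end
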